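(* Let $M$ be a right $R$-module and $S={\rm End}_R(M)$. (1) The following are equivalent: (i) $M$ is a strongly self-Rickart right $R$-module; (ii) $S$ is a strongly self-Rickart right $S$-module and for every $f\in S$, ${\rm Ker}(f)$ is $M$-cyclic; (iii) $S$ is a strongly self-Rickart right $S$-module and for every $f\in S$, ${\rm Ker}(f)\in {\rm Stat}({\rm Hom}_R(M,-))$; (iv) $S$ is a strongly self-Rickart right $S$-module and for every $f\in S$, the inclusion ${\rm ker}(f):{\rm Ker}(f)\to M$ is a locally split monomorphism; (v) $S$ is a strongly self-Rickart right $S$-module and $M$ is $k$-quasi-retractable. (2) The following are equivalent: (i) $M$ is a dual strongly self-Rickart right $R$-module; (ii) $S$ is a strongly self-Rickart left $S$-module and for every $f\in S$, ${\rm Coker}(f)$ is $M$-cocyclic; (iii) $S$ is a strongly self-Rickart left $S$-module and for every $f\in S$, ${\rm Coker}(f)\in {\rm Refl}({\rm Hom}_R(-,M))$; (iv) $S$ is a strongly self-Rickart left $S$-module and for every $f\in S$, the projection ${\rm coker}(f):M\to {\rm Coker}(f)$ is a locally split epimorphism; (v) $S$ is a strongly self-Rickart left $S$-module and $M$ is $c$-quasi-coretractable.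
   Context: A module $X$ is strongly self-Rickart if for every endomorphism $g$ of $X$, ${\rm Ker}(g)$ is a direct summand of $X$ which is fully invariant ($h({\rm Ker}(g))\subseteq{\rm Ker}(g)$ for all endomorphisms $h$); $X$ is dual strongly self-Rickart if for every endomorphism $g$, ${\rm Im}(g)$ is a fully invariant direct summand of $X$. A module $Y$ is $M$-cyclic if there is an epimorphism $M\to Y$; $Y$ is $M$-cocyclic if there is a monomorphism $Y\to M$. ${\rm Stat}({\rm Hom}_R(M,-))$ is the class of right $R$-modules $X$ for which the counit (evaluation) map ${\rm Hom}_R(M,X)\otimes_S M\to X$ of the adjunction $(-\otimes_S M,{\rm Hom}_R(M,-))$ is an isomorphism. ${\rm Refl}({\rm Hom}_R(-,M))$ is the class of right $R$-modules $X$ for which the natural evaluation map $X\to {\rm Hom}_S({\rm Hom}_R(X,M),M)$ is an isomorphism (for the pair of contravariant functors ${\rm Hom}_R(-,M)$ from right $R$-modules to left $S$-modules and ${\rm Hom}_S(-,M)$ back). A monomorphism $u:A\to B$ of right $R$-modules is locally split if for every $a\in A$ there is an $R$-homomorphism $h:B\to A$ with $h(u(a))=a$; an epimorphism $v:B\to C$ is locally split if for every $c\in C$ there is an $R$-homomorphism $h:C\to B$ with $v(h(c))=c$. $M$ is $k$-quasi-retractable if ${\rm Hom}_R(M,{\rm Ker}(f))\neq 0$ for every $f\in {\rm End}_R(M)$ with ${\rm Ker}(f)\neq 0$; $M$ is $c$-quasi-coretractable if ${\rm Hom}_R({\rm Coker}(f),M)\neq 0$ for every $f\in{\rm End}_R(M)$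 with ${\rm Coker}(f)\neq 0$. *)

theory Defs
  imports "HOL-Algebra.Module"
begin

text \<open>Opposite ring: a right A-module is a left module over the opposite ring.
  For a module record V, the field smult V a x is read as x.a when V is a right module.\<close>

definition opp :: "('a, 'b) ring_scheme \<Rightarrow> ('a, 'b) ring_scheme" where
  "opp A = A\<lparr>mult := (\<lambda>x y. monoid.mult A y x)\<rparr>"

text \<open>Left modules over an arbitrary (not necessarily commutative) unital ring.\<close>
definition lmod :: "('r, 'c) ring_scheme \<Rightarrow> ('r, 'm) module \<Rightarrow> bool" where
  "lmod A V \<longleftrightarrow> ring A \<and> abelian_group V \<and>
     (\<forall>a\<in>carrier A. \<forall>x\<in>carrier V. smult V a x \<in> carrier V) \<and>
     (\<forall>a\<in>carrier A. \<forall>b\<in>carrier A. \<forall>x\<in>carrier V.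
        smult V (a \<oplus>\<^bsub>A\<^esub> b) x = smult V a x \<oplus>\<^bsub>V\<^esub> smult V b x) \<and>
     (\<forall>a\<in>carrier A. \<forall>x\<in>carrier V. \<forall>y\<in>carrier V.
        smult V a (x \<oplus>\<^bsub>V\<^esub> y) = smult V a x \<oplus>\<^bsub>V\<^esub> smult V a y) \<and>
     (\<forall>a\<in>carrier A. \<forall>b\<in>carrier A. \<forall>x\<in>carrier V.
        smult V (a \<otimes>\<^bsub>A\<^esub> b) x = smult V a (smult V b x)) \<and>
     (\<forall>x\<in>carrier V. smult V \<one>\<^bsub>A\<^esub> x = x)"

definition rmod :: "('r, 'c) ring_scheme \<Rightarrow> ('r, 'm) module \<Rightarrow> bool" where
  "rmod A V \<longleftrightarrow> lmod (opp A) V"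

definition mhom :: "('r, 'c) ring_scheme \<Rightarrow> ('r, 'm) module \<Rightarrow> ('r, 'n) module \<Rightarrow> ('m \<Rightarrow> 'n) set" where
  "mhom A V W = {f. f \<in> carrier V \<rightarrow>\<^sub>E carrier W \<and>
     (\<forall>x\<in>carrier V. \<forall>y\<in>carrier V. f (x \<oplus>\<^bsub>V\<^esub> y) = f x \<oplus>\<^bsub>W\<^esub> f y) \<and>
     (\<forall>a\<in>carrier A. \<forall>x\<in>carrier V. f (smult V a x) = smult W a (f x))}"

definition mker :: "('r, 'm) module \<Rightarrow> ('r, 'n) module \<Rightarrow> ('m \<Rightarrow> 'n) \<Rightarrow> 'm set" where
  "mker V W f = {x \<in> carrier V. f x = \<zero>\<^bsub>W\<^esub>}"

definition submod :: "('r, 'm) module \<Rightarrow> 'm set \<Rightarrow> ('r, 'm) module" where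
  "submod V N = V\<lparr>carrier := N\<rparr>"

definition is_submod :: "('r, 'c) ring_scheme \<Rightarrow> ('r, 'm) module \<Rightarrow> 'm set \<Rightarrow> bool" where
  "is_submod A V N \<longleftrightarrow> N \<subseteq> carrier V \<and> \<zero>\<^bsub>V\<^esub> \<in> N \<and>
     (\<forall>x\<in>N. \<forall>y\<in>N. x \<oplus>\<^bsub>V\<^esub> y \<in> N) \<and> (\<forall>x\<in>N. \<ominus>\<^bsub>V\<^esub> x \<in> N) \<and>
     (\<forall>a\<in>carrier A. \<forall>x\<in>N. smult V a x \<in> N)"

definition dsummand :: "('r, 'c) ring_scheme \<Rightarrow> ('r, 'm) module \<Rightarrow> 'm set \<Rightarrow> bool" where
  "dsummand A V N \<longleftrightarrow> is_submod A V N \<and>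
     (\<exists>L. is_submod A V L \<and> N \<inter> L = {\<zero>\<^bsub>V\<^esub>} \<and>
          (\<forall>x\<in>carrier V. \<exists>n\<in>N. \<exists>l\<in>L. x = n \<oplus>\<^bsub>V\<^esub> l))"

definition fully_invariant :: "('r, 'c) ring_scheme \<Rightarrow> ('r, 'm) module \<Rightarrow> 'm set \<Rightarrow> bool" where
  "fully_invariant A V N \<longleftrightarrow> (\<forall>h\<in>mhom A V V. h ` N \<subseteq> N)"

text \<open>Strongly self-Rickart / dual strongly self-Rickart, for left A-modules
  (for right modules, use A := opp A).\<close>
definition strongly_self_rickart :: "('r, 'c) ring_scheme \<Rightarrow> ('r, 'm) module \<Rightarrow> bool" where
  "strongly_self_rickart A V \<longleftrightarrow>
     (\<forall>g\<in>mhom A V V. dsummand A V (mker V V g) \<and> fully_invariant A V (mker V V g))"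

definition dual_strongly_self_rickart :: "('r, 'c) ring_scheme \<Rightarrow> ('r, 'm) module \<Rightarrow> bool" where
  "dual_strongly_self_rickart A V \<longleftrightarrow>
     (\<forall>g\<in>mhom A V V. dsummand A V (g ` carrier V) \<and> fully_invariant A V (g ` carrier V))"

definition End_ring :: "('r, 'c) ring_scheme \<Rightarrow> ('r, 'm) module \<Rightarrow> ('m \<Rightarrow> 'm) ring" where
  "End_ring A V = \<lparr>carrier = mhom A V V,
     mult = (\<lambda>f g. \<lambda>x\<in>carrier V. f (g x)),
     one = (\<lambda>x\<in>carrier V. x),
     zero = (\<lambda>x\<in>carrier V. \<zero>\<^bsub>V\<^esub>),
     add = (\<lambda>f g. \<lambda>x\<in>carrier V. f x \<oplus>\<^bsub>V\<^esub> g x)\<rparr>"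

definition ring_lmod :: "('a, 'b) ring_scheme \<Rightarrow> ('a, 'a) module" where
  "ring_lmod A = \<lparr>carrier = carrier A, mult = monoid.mult A, one = one A, zero = zero A,
     add = add A, smult = monoid.mult A\<rparr>"

definition ring_rmod :: "('a, 'b) ring_scheme \<Rightarrow> ('a, 'a) module" where
  "ring_rmod A = \<lparr>carrier = carrier A, mult = monoid.mult A, one = one A, zero = zero A,
     add = add A, smult = (\<lambda>s x. monoid.mult A x s)\<rparr>"

definition End_lmod :: "('r, 'm) module \<Rightarrow> ('m \<Rightarrow> 'm, 'm) module" where
  "End_lmod V = \<lparr>carrier = carrier V, mult = monoid.mult V, one = one V, zero = zero V,
     add = add V, smult = (\<lambda>s m. s m)\<rparr>"

definition mcoset :: "('r, 'm) module \<Rightarrow> 'm set \<Rightarrow> 'm \<Rightarrow> 'm set" where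
  "mcoset V N a = (\<lambda>n. a \<oplus>\<^bsub>V\<^esub> n) ` N"

definition quot_mod :: "('r, 'm) module \<Rightarrow> 'm set \<Rightarrow> ('r, 'm set) module" where
  "quot_mod V N = \<lparr>carrier = mcoset V N ` carrier V,
     mult = undefined, one = undefined,
     zero = N,
     add = (\<lambda>A B. \<Union>a\<in>A. \<Union>b\<in>B. mcoset V N (a \<oplus>\<^bsub>V\<^esub> b)),
     smult = (\<lambda>r A. \<Union>a\<in>A. mcoset V N (smult V r a))\<rparr>"

definition quot_proj :: "('r, 'm) module \<Rightarrow> 'm set \<Rightarrow> 'm \<Rightarrow> 'm set" where
  "quot_proj V N = (\<lambda>a\<in>carrier V. mcoset V N a)"

definition Coker :: "('r, 'm) module \<Rightarrow> ('m \<Rightarrow> 'm) \<Rightarrow> ('r, 'm set) module" where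
  "Coker V f = quot_mod V (f ` carrier V)"

definition coker :: "('r, 'm) module \<Rightarrow> ('m \<Rightarrow> 'm) \<Rightarrow> 'm \<Rightarrow> 'm set" where
  "coker V f = quot_proj V (f ` carrier V)"

text \<open>Free abelian group on a set P: finitely supported integer-valued functions on P.\<close>
definition free_on :: "'p set \<Rightarrow> ('p \<Rightarrow> int) set" where
  "free_on P = {c. finite {p. c p \<noteq> 0} \<and> {p. c p \<noteq> 0} \<subseteq> P}"

definition delta :: "'p \<Rightarrow> 'p \<Rightarrow> int" where
  "delta p = (\<lambda>q. if q = p then 1 else 0)"

inductive_set zspan :: "('p \<Rightarrow> int) set \<Rightarrow> ('p \<Rightarrow> int) set" for G where
  zspan_zero: "(\<lambda>_. 0) \<in> zspan G"
| zspan_gen: "g \<in> G \<Longrightarrow> g \<in> zspan G"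
| zspan_diff: "a \<in> zspan G \<Longrightarrow> b \<in> zspan G \<Longrightarrow> a - b \<in> zspan G"

text \<open>Defining relations of Hom_R(M,V) (x)_S M, S = End_R(M), where Hom_R(M,V) is a
  right S-module via (g.s)(y) = g(s y) and M is a left S-module via s.m = s m.\<close>
definition tens_rel :: "('r, 'c) ring_scheme \<Rightarrow> ('r, 'm) module \<Rightarrow> ('r, 'x) module
    \<Rightarrow> (('m \<Rightarrow> 'x) \<times> 'm \<Rightarrow> int) set" where
  "tens_rel R M V =
     {delta (\<lambda>y\<in>carrier M. g y \<oplus>\<^bsub>V\<^esub> g' y, m) - delta (g, m) - delta (g', m) | g g' m.
        g \<in> mhom (opp R) M V \<and> g' \<in> mhom (opp R) M V \<and> m \<in> carrier M}
   \<union> {delta (g, m \<oplus>\<^bsub>M\<^esub> m') - delta (g, m) - delta (g, m') | g m m'.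
        g \<in> mhom (opp R) M V \<and> m \<in> carrier M \<and> m' \<in> carrier M}
   \<union> {delta (\<lambda>y\<in>carrier M. g (s y), m) - delta (g, s m) | g s m.
        g \<in> mhom (opp R) M V \<and> s \<in> carrier (End_ring (opp R) M) \<and> m \<in> carrier M}"

text \<open>The counit g (x) m |-> g(m), on formal sums.\<close>
definition tens_eval :: "('r, 'x) module \<Rightarrow> (('m \<Rightarrow> 'x) \<times> 'm \<Rightarrow> int) \<Rightarrow> 'x" where
  "tens_eval V c = finsum V (\<lambda>p. [c p] \<cdot>\<^bsub>V\<^esub> (fst p (snd p))) {p. c p \<noteq> 0}"

text \<open>V in Stat(Hom_R(M,-)): the counit Hom_R(M,V) (x)_S M -> V, i.e. the map induced by
  tens_eval on the quotient free/relations, is bijective (it is automatically R-linear).\<close>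
definition in_Stat :: "('r, 'c) ring_scheme \<Rightarrow> ('r, 'm) module \<Rightarrow> ('r, 'x) module \<Rightarrow> bool" where
  "in_Stat R M V \<longleftrightarrow>
     tens_eval V ` free_on (mhom (opp R) M V \<times> carrier M) = carrier V \<and>
     {c \<in> free_on (mhom (opp R) M V \<times> carrier M). tens_eval V c = \<zero>\<^bsub>V\<^esub>}
       = zspan (tens_rel R M V)"

definition homXM_lmod :: "('r, 'c) ring_scheme \<Rightarrow> ('r, 'm) module \<Rightarrow> ('r, 'x) module
    \<Rightarrow> ('m \<Rightarrow> 'm, 'x \<Rightarrow> 'm) module" where
  "homXM_lmod R M V = \<lparr>carrier = mhom (opp R) V M, mult = undefined, one = undefined,
     zero = (\<lambda>x\<in>carrier V. \<zero>\<^bsub>M\<^esub>),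
     add = (\<lambda>\<phi> \<psi>. \<lambda>x\<in>carrier V. \<phi> x \<oplus>\<^bsub>M\<^esub> \<psi> x),
     smult = (\<lambda>s \<phi>. \<lambda>x\<in>carrier V. s (\<phi> x))\<rparr>"

definition in_Refl :: "('r, 'c) ring_scheme \<Rightarrow> ('r, 'm) module \<Rightarrow> ('r, 'x) module \<Rightarrow> bool" where
  "in_Refl R M V \<longleftrightarrow>
     bij_betw (\<lambda>x\<in>carrier V. (\<lambda>\<phi>\<in>mhom (opp R) V M. \<phi> x)) (carrier V)
       (mhom (End_ring (opp R) M) (homXM_lmod R M V) (End_lmod M))"

definition M_cyclic :: "('r, 'c) ring_scheme \<Rightarrow> ('r, 'm) module \<Rightarrow> ('r, 'x) module \<Rightarrow> bool" where
  "M_cyclic R M W \<longleftrightarrow> (\<exists>h\<in>mhom (opp R) M W. h ` carrier M = carrier W)"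

definition M_cocyclic :: "('r, 'c) ring_scheme \<Rightarrow> ('r, 'm) module \<Rightarrow> ('r, 'x) module \<Rightarrow> bool" where
  "M_cocyclic R M W \<longleftrightarrow> (\<exists>h\<in>mhom (opp R) W M. inj_on h (carrier W))"

definition incl_locally_split :: "('r, 'c) ring_scheme \<Rightarrow> ('r, 'm) module \<Rightarrow> 'm set \<Rightarrow> bool" where
  "incl_locally_split R M K \<longleftrightarrow> (\<forall>a\<in>K. \<exists>h\<in>mhom (opp R) M (submod M K). h a = a)"

definition epi_locally_split :: "('r, 'c) ring_scheme \<Rightarrow> ('r, 'm) module \<Rightarrow> ('r, 'x) module
    \<Rightarrow> ('m \<Rightarrow> 'x) \<Rightarrow> bool" where
  "epi_locally_split R B C v \<longleftrightarrow> (\<forall>c\<in>carrier C. \<exists>h\<in>mhom (opp R) C B. v (h c) = c)"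

definition k_quasi_retractable :: "('r, 'c) ring_scheme \<Rightarrow> ('r, 'm) module \<Rightarrow> bool" where
  "k_quasi_retractable R M \<longleftrightarrow>
     (\<forall>f\<in>carrier (End_ring (opp R) M). mker M M f \<noteq> {\<zero>\<^bsub>M\<^esub>} \<longrightarrow>
        (\<exists>h\<in>mhom (opp R) M (submod M (mker M M f)). \<exists>x\<in>carrier M. h x \<noteq> \<zero>\<^bsub>M\<^esub>))"

definition c_quasi_coretractable :: "('r, 'c) ring_scheme \<Rightarrow> ('r, 'm) module \<Rightarrow> bool" where
  "c_quasi_coretractable R M \<longleftrightarrow>
     (\<forall>f\<in>carrier (End_ring (opp R) M). carrier (Coker M f) \<noteq> {\<zero>\<^bsub>Coker M f\<^esub>} \<longrightarrow>
        (\<exists>h\<in>mhom (opp R) (Coker M f) M. \<exists>c\<in>carrier (Coker M f). h c \<noteq> \<zero>\<^bsub>M\<^esub>))"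

end

theory Submission
  imports Defs "HOL-Library.Function_Algebras"
begin

(* Write S = End(M). If S is strongly self-Rickart as a right (resp. left) module over itself,
   then all idempotents of S are central, and the right annihilator r(f) = eS (resp. the left
   annihilator l(f) = Se) of every f in S is generated by a central idempotent e. For such e,
   Ker f is a fully invariant direct summand as soon as e fixes Ker f (then Ker f = e(M)), and
   Im f is one as soon as Ker e lies in Im f (then Im f = Ker e).
   Conditions (ii)-(iv) on Ker f say that Ker f is generated by images of maps M -> Ker f; these
   maps are annihilated by f, hence fixed by e. Dually, conditions (ii)-(iv) on Coker f say that
   the maps Coker f -> M detect its nonzero elements; composed with the projection M -> Coker f
   they annihilate f, hence are fixed by e on the right, which forces Ker e into Im f. For (v) the
   hypothesis is applied to f + e, whose kernel is Ker f \<inter> Ker e and whose image contains no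
   element of Ker e outside Im f. Conversely, if Ker f (resp. Im f) is a direct summand, then Ker f (resp. Coker f)
   is a retract of M, and each of (ii)-(v) follows. *)

lemma opp_simps [simp]:
  "carrier (opp A) = carrier A" "add (opp A) = add A" "zero (opp A) = zero A"
  "one (opp A) = one A" "mult (opp A) x y = mult A y x"
  by (simp_all add: opp_def)

lemma End_ring_simps:
  "carrier (End_ring A V) = mhom A V V"
  "mult (End_ring A V) = (\<lambda>f g. \<lambda>x\<in>carrier V. f (g x))"
  "one (End_ring A V) = (\<lambda>x\<in>carrier V. x)"
  "zero (End_ring A V) = (\<lambda>x\<in>carrier V. \<zero>\<^bsub>V\<^esub>)"
  "add (End_ring A V) = (\<lambda>f g. \<lambda>x\<in>carrier V. f x \<oplus>\<^bsub>V\<^esub> g x)"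
  by (simp_all add: End_ring_def)

lemma ring_rmod_simps [simp]:
  "carrier (ring_rmod S) = carrier S" "add (ring_rmod S) = add S" "zero (ring_rmod S) = zero S"
  "smult (ring_rmod S) = (\<lambda>s x. mult S x s)"
  by (simp_all add: ring_rmod_def)

lemma ring_lmod_simps [simp]:
  "carrier (ring_lmod S) = carrier S" "add (ring_lmod S) = add S" "zero (ring_lmod S) = zero S"
  "smult (ring_lmod S) = mult S"
  by (simp_all add: ring_lmod_def)

lemma submod_simps [simp]:
  "carrier (submod V N) = N" "add (submod V N) = add V" "zero (submod V N) = zero V"
  "smult (submod V N) = smult V"
  by (simp_all add: submod_def)

lemma homXM_lmod_simps [simp]:
  "carrier (homXM_lmod R M V) = mhom (opp R) V M"
  "add (homXM_lmod R M V) = (\<lambda>\<phi> \<psi>. \<lambda>x\<in>carrier V. \<phi> x \<oplus>\<^bsub>M\<^esub> \<psi> x)"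
  "smult (homXM_lmod R M V) = (\<lambda>s \<phi>. \<lambda>x\<in>carrier V. s (\<phi> x))"
  by (simp_all add: homXM_lmod_def)

lemma End_lmod_simps [simp]:
  "carrier (End_lmod M) = carrier M" "add (End_lmod M) = add M" "smult (End_lmod M) = (\<lambda>s m. s m)"
  by (simp_all add: End_lmod_def)

lemma mhomD:
  assumes "f \<in> mhom A V W"
  shows mhom_closed: "x \<in> carrier V \<Longrightarrow> f x \<in> carrier W"
    and mhom_undefined: "x \<notin> carrier V \<Longrightarrow> f x = undefined"
    and mhom_add: "x \<in> carrier V \<Longrightarrow> y \<in> carrier V \<Longrightarrow> f (x \<oplus>\<^bsub>V\<^esub> y) = f x \<oplus>\<^bsub>W\<^esub> f y"
    and mhom_smult: "a \<in> carrier A \<Longrightarrow> x \<in> carrier V \<Longrightarrow> f (smult V a x) = smult W a (f x)"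
  using assms by (auto simp: mhom_def PiE_def extensional_def)

lemma mhomI:
  assumes "\<And>x. x \<in> carrier V \<Longrightarrow> f x \<in> carrier W"
    and "\<And>x. x \<notin> carrier V \<Longrightarrow> f x = undefined"
    and "\<And>x y. x \<in> carrier V \<Longrightarrow> y \<in> carrier V \<Longrightarrow> f (x \<oplus>\<^bsub>V\<^esub> y) = f x \<oplus>\<^bsub>W\<^esub> f y"
    and "\<And>a x. a \<in> carrier A \<Longrightarrow> x \<in> carrier V \<Longrightarrow> f (smult V a x) = smult W a (f x)"
  shows "f \<in> mhom A V W"
  using assms by (auto simp: mhom_def PiE_def extensional_def)

lemma mhom_comp:
  assumes "g \<in> mhom A V W" "f \<in> mhom A U V"
    and "\<And>x y. x \<in> carrier U \<Longrightarrow> y \<in> carrier U \<Longrightarrow> x \<oplus>\<^bsub>U\<^esub> y \<in> carrier U"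
    and "\<And>a x. a \<in> carrier A \<Longrightarrow> x \<in> carrier U \<Longrightarrow> smult U a x \<in> carrier U"
  shows "(\<lambda>x\<in>carrier U. g (f x)) \<in> mhom A U W"
  using assms by (intro mhomI) (simp_all add: mhom_closed mhom_add mhom_smult)

lemma mhom_eqI:
  assumes "f \<in> mhom A V W" "g \<in> mhom A V W" "\<And>x. x \<in> carrier V \<Longrightarrow> f x = g x"
  shows "f = g"
  using assms by (metis ext mhom_undefined)

lemma mhom_zero:
  assumes "f \<in> mhom A V W" "abelian_group V" "abelian_group W"
  shows "f \<zero>\<^bsub>V\<^esub> = \<zero>\<^bsub>W\<^esub>"
proof -
  interpret V: abelian_group V by fact
  interpret W: abelian_group W by fact
  have "f \<zero>\<^bsub>V\<^esub> \<oplus>\<^bsub>W\<^esub> f \<zero>\<^bsub>V\<^esub> = f \<zero>\<^bsub>V\<^esub>"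
    using mhom_add[OF assms(1), of "\<zero>\<^bsub>V\<^esub>" "\<zero>\<^bsub>V\<^esub>"] by simp
  then show ?thesis
    using mhom_closed[OF assms(1) V.zero_closed] by simp
qed

lemma mhom_a_inv:
  assumes "f \<in> mhom A V W" "abelian_group V" "abelian_group W" "x \<in> carrier V"
  shows "f (\<ominus>\<^bsub>V\<^esub> x) = \<ominus>\<^bsub>W\<^esub> f x"
proof -
  interpret V: abelian_group V by fact
  interpret W: abelian_group W by fact
  have "f (\<ominus>\<^bsub>V\<^esub> x) \<oplus>\<^bsub>W\<^esub> f x = \<zero>\<^bsub>W\<^esub>"
    using mhom_add[OF assms(1), of "\<ominus>\<^bsub>V\<^esub> x" x] mhom_zero[OF assms(1-3)] assms(4)
    by (simp add: V.l_neg)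
  then show ?thesis
    using W.add.inv_equality assms(1,4) mhom_closed by fastforce
qed

lemma mhom_a_minus:
  assumes "f \<in> mhom A V W" "abelian_group V" "abelian_group W" "x \<in> carrier V" "y \<in> carrier V"
  shows "f (x \<ominus>\<^bsub>V\<^esub> y) = f x \<ominus>\<^bsub>W\<^esub> f y"
  using assms mhom_a_inv[OF assms(1-3)] mhom_add[OF assms(1)]
  by (simp add: a_minus_def abelian_group.a_inv_closed)

context abelian_group

begin

lemma minus_eq_zero_iff: "x \<in> carrier G \<Longrightarrow> y \<in> carrier G \<Longrightarrow> x \<ominus> y = \<zero> \<longleftrightarrow> x = y"
  by (metis a_minus_def add.inv_closed add.inv_equality minus_minus r_neg)

lemma minus_add_cancel: "x \<in> carrier G \<Longrightarrow> y \<in> carrier G \<Longrightarrow> (x \<ominus> y) \<oplus> y = x"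
  by (metis a_assoc a_minus_def add.inv_closed l_neg r_zero)

lemma add_minus_cancel: "x \<in> carrier G \<Longrightarrow> y \<in> carrier G \<Longrightarrow> (x \<oplus> y) \<ominus> y = x"
  by (metis a_assoc a_minus_def add.inv_closed r_neg r_zero)

lemma add_minus_cancel_left: "x \<in> carrier G \<Longrightarrow> y \<in> carrier G \<Longrightarrow> (x \<oplus> y) \<ominus> x = y"
  by (metis a_comm add_minus_cancel)

lemma minus_self: "x \<in> carrier G \<Longrightarrow> x \<ominus> x = \<zero>"
  by (simp add: a_minus_def r_neg)

lemma minus_add_minus: "x \<in> carrier G \<Longrightarrow> y \<in> carrier G \<Longrightarrow> u \<in> carrier G \<Longrightarrow> v \<in> carrier G \<Longrightarrow>
   (x \<oplus> y) \<ominus> (u \<oplus> v) = (x \<ominus> u) \<oplus> (y \<ominus> v)"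
  by (simp add: a_minus_def minus_add a_ac)

lemma minus_minus_cancel: "x \<in> carrier G \<Longrightarrow> y \<in> carrier G \<Longrightarrow> x \<ominus> (x \<ominus> y) = y"
  by (metis a_minus_def add.inv_closed minus_add minus_minus r_neg2)

lemma minus_minus_swap: "x \<in> carrier G \<Longrightarrow> y \<in> carrier G \<Longrightarrow> \<ominus> (x \<ominus> y) = y \<ominus> x"
  by (simp add: a_minus_def minus_add a_comm)

end

section \<open>Direct summands, idempotents and quotients\<close>

definition quot_lift :: "('r, 'm) module \<Rightarrow> 'm set \<Rightarrow> ('m \<Rightarrow> 'n) \<Rightarrow> 'm set \<Rightarrow> 'n" where
  "quot_lift V N g = (\<lambda>X\<in>carrier (quot_mod V N). g (SOME a. a \<in> X))"

locale additive_action = abelian_group V for V :: "('r, 'm) module" (structure) +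
  fixes A :: "('r, 'c) ring_scheme"
  assumes smult_closed [simp, intro]: "a \<in> carrier A \<Longrightarrow> x \<in> carrier V \<Longrightarrow> smult V a x \<in> carrier V"
    and smult_add: "a \<in> carrier A \<Longrightarrow> x \<in> carrier V \<Longrightarrow> y \<in> carrier V \<Longrightarrow>
      smult V a (x \<oplus> y) = smult V a x \<oplus> smult V a y"
begin

lemma smult_zero [simp]: "a \<in> carrier A \<Longrightarrow> smult V a \<zero> = \<zero>"
  using smult_add[of a \<zero> \<zero>] by simp

lemma smult_a_inv: "a \<in> carrier A \<Longrightarrow> x \<in> carrier V \<Longrightarrow> smult V a (\<ominus> x) = \<ominus> smult V a x"
  by (metis add.inv_closed add.inv_equality l_neg smult_add smult_closed smult_zero)

lemma smult_minus: "a \<in> carrier A \<Longrightarrow> x \<in> carrier V \<Longrightarrow> y \<in> carrier V \<Longrightarrow>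
   smult V a (x \<ominus> y) = smult V a x \<ominus> smult V a y"
  by (simp add: a_minus_def smult_add smult_a_inv)

abbreviation endos :: "('m \<Rightarrow> 'm) set" where
  "endos \<equiv> mhom A V V"

lemma endo_zero: "f \<in> endos \<Longrightarrow> f \<zero> = \<zero>"
  by (rule mhom_zero[OF _ abelian_group_axioms abelian_group_axioms])

lemma endo_a_inv: "f \<in> endos \<Longrightarrow> x \<in> carrier V \<Longrightarrow> f (\<ominus> x) = \<ominus> f x"
  by (rule mhom_a_inv[OF _ abelian_group_axioms abelian_group_axioms])

lemma endo_minus: "f \<in> endos \<Longrightarrow> x \<in> carrier V \<Longrightarrow> y \<in> carrier V \<Longrightarrow> f (x \<ominus> y) = f x \<ominus> f y"
  by (rule mhom_a_minus[OF _ abelian_group_axioms abelian_group_axioms])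

lemma endo_comp: "f \<in> endos \<Longrightarrow> g \<in> endos \<Longrightarrow> (\<lambda>x\<in>carrier V. f (g x)) \<in> endos"
  by (rule mhomI) (simp_all add: mhom_closed mhom_add mhom_smult)

lemma endo_id: "(\<lambda>x\<in>carrier V. x) \<in> endos"
  by (rule mhomI) auto

lemma endo_zero_fun: "(\<lambda>x\<in>carrier V. \<zero>) \<in> endos"
  by (rule mhomI) auto

lemma endo_add_fun: "f \<in> endos \<Longrightarrow> g \<in> endos \<Longrightarrow> (\<lambda>x\<in>carrier V. f x \<oplus> g x) \<in> endos"
  by (rule mhomI) (simp_all add: mhom_closed mhom_add mhom_smult smult_add a_ac)

lemma endo_a_inv_fun: "f \<in> endos \<Longrightarrow> (\<lambda>x\<in>carrier V. \<ominus> f x) \<in> endos"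
  by (rule mhomI) (simp_all add: mhom_closed mhom_add mhom_smult smult_a_inv minus_add a_comm)

lemma endo_minus_fun: "f \<in> endos \<Longrightarrow> g \<in> endos \<Longrightarrow> (\<lambda>x\<in>carrier V. f x \<ominus> g x) \<in> endos"
  by (rule mhomI) (simp_all add: mhom_closed mhom_add mhom_smult smult_minus minus_add_minus)

lemma complement_endo: "e \<in> endos \<Longrightarrow> (\<lambda>x\<in>carrier V. x \<ominus> e x) \<in> endos"
  using endo_minus_fun[OF endo_id] by (simp cong: restrict_cong)

lemma kernel_is_submod: "f \<in> endos \<Longrightarrow> is_submod A V (mker V V f)"
  unfolding is_submod_def mker_def
  by (auto simp: endo_zero endo_a_inv mhom_add mhom_smult)

lemma image_is_submod: "f \<in> endos \<Longrightarrow> is_submod A V (f ` carrier V)"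
  unfolding is_submod_def
proof (intro conjI ballI)
  assume f: "f \<in> endos"
  show "f ` carrier V \<subseteq> carrier V" using mhom_closed[OF f] by blast
  show "\<zero> \<in> f ` carrier V" using endo_zero[OF f] by (metis image_eqI zero_closed)
  fix x y assume "x \<in> f ` carrier V" "y \<in> f ` carrier V"
  then obtain u v where "u \<in> carrier V" "v \<in> carrier V" "x = f u" "y = f v" by blast
  then show "x \<oplus> y \<in> f ` carrier V" by (metis a_closed image_eqI mhom_add[OF f])
next
  assume f: "f \<in> endos"
  fix x assume "x \<in> f ` carrier V"
  then obtain u where "u \<in> carrier V" "x = f u" by blast
  then show "\<ominus> x \<in> f ` carrier V" by (metis a_inv_closed image_eqI endo_a_inv[OF f])
next
  assume f: "f \<in> endos"
  fix a x assume a: "a \<in> carrier A" and "x \<in> f ` carrier V"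
  then obtain u where "u \<in> carrier V" "x = f u" by blast
  then show "smult V a x \<in> f ` carrier V" by (metis a image_eqI smult_closed mhom_smult[OF f])
qed

lemma submod_abelian_group:
  assumes "is_submod A V N"
  shows "abelian_group (submod V N)"
proof -
  have NV: "N \<subseteq> carrier V" using assms by (simp add: is_submod_def)
  show ?thesis
  proof (rule abelian_groupI)
    show "\<And>x y z. x \<in> carrier (submod V N) \<Longrightarrow> y \<in> carrier (submod V N) \<Longrightarrow> z \<in> carrier (submod V N) \<Longrightarrow>
      x \<oplus>\<^bsub>submod V N\<^esub> y \<oplus>\<^bsub>submod V N\<^esub> z = x \<oplus>\<^bsub>submod V N\<^esub> (y \<oplus>\<^bsub>submod V N\<^esub> z)"
      using NV by (simp add: a_assoc subset_iff)
    show "\<And>x y. x \<in> carrier (submod V N) \<Longrightarrow> y \<in> carrier (submod V N) \<Longrightarrow>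
      x \<oplus>\<^bsub>submod V N\<^esub> y = y \<oplus>\<^bsub>submod V N\<^esub> x"
      using NV by (simp add: a_comm subset_iff)
    show "\<And>x. x \<in> carrier (submod V N) \<Longrightarrow> \<zero>\<^bsub>submod V N\<^esub> \<oplus>\<^bsub>submod V N\<^esub> x = x"
      using NV by (simp add: subset_iff)
    show "\<And>x. x \<in> carrier (submod V N) \<Longrightarrow> \<exists>y\<in>carrier (submod V N). y \<oplus>\<^bsub>submod V N\<^esub> x = \<zero>\<^bsub>submod V N\<^esub>"
      using assms NV unfolding is_submod_def by (metis in_mono l_neg submod_simps(1,2,3))
  qed (use assms in \<open>simp_all add: is_submod_def\<close>)
qed

lemma submod_a_inv:
  assumes N: "is_submod A V N" and x: "x \<in> N"
  shows "\<ominus>\<^bsub>submod V N\<^esub> x = \<ominus> x"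
proof -
  interpret N: abelian_group "submod V N" by (rule submod_abelian_group[OF N])
  have "\<ominus> x \<in> N" "x \<in> carrier V" using N x by (auto simp: is_submod_def)
  then have "\<ominus> x \<oplus>\<^bsub>submod V N\<^esub> x = \<zero>\<^bsub>submod V N\<^esub>" by (simp add: l_neg)
  then show ?thesis using N.minus_equality \<open>\<ominus> x \<in> N\<close> x by simp
qed

lemma mhom_into_submod_iff:
  "N \<subseteq> carrier V \<Longrightarrow> g \<in> mhom A V (submod V N) \<longleftrightarrow> g \<in> endos \<and> (\<forall>x\<in>carrier V. g x \<in> N)"
  unfolding mhom_def by (auto simp: PiE_def Pi_def)

lemma idempotent_summands:
  assumes e: "e \<in> endos" and idem: "\<And>x. x \<in> carrier V \<Longrightarrow> e (e x) = e x"
  shows "dsummand A V (e ` carrier V)" "dsummand A V (mker V V e)"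
proof -
  have ker: "is_submod A V (mker V V e)" by (rule kernel_is_submod[OF e])
  have img: "is_submod A V (e ` carrier V)" by (rule image_is_submod[OF e])
  have split: "x = e x \<oplus> (x \<ominus> e x)" "x \<ominus> e x \<in> mker V V e" if x: "x \<in> carrier V" for x
  proof -
    have ex: "e x \<in> carrier V" using mhom_closed[OF e x] .
    show "x = e x \<oplus> (x \<ominus> e x)" using minus_add_cancel[OF x ex] ex x by (simp add: a_comm)
    show "x \<ominus> e x \<in> mker V V e" using endo_minus[OF e x ex] idem[OF x] minus_self[OF ex] x ex
      by (simp add: mker_def)
  qed
  have disjoint: "e ` carrier V \<inter> mker V V e = {\<zero>}"
  proof
    show "e ` carrier V \<inter> mker V V e \<subseteq> {\<zero>}" using idem by (auto simp: mker_def)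
    show "{\<zero>} \<subseteq> e ` carrier V \<inter> mker V V e"
      using endo_zero[OF e] by (auto simp: mker_def intro: image_eqI[of _ _ \<zero>])
  qed
  show "dsummand A V (e ` carrier V)"
    unfolding dsummand_def
  proof (intro conjI exI[of _ "mker V V e"] ballI)
    fix x assume "x \<in> carrier V"
    then show "\<exists>n\<in>e ` carrier V. \<exists>l\<in>mker V V e. x = n \<oplus> l" using split by blast
  qed (fact img ker disjoint)+
  show "dsummand A V (mker V V e)"
    unfolding dsummand_def
  proof (intro conjI exI[of _ "e ` carrier V"] ballI)
    fix x assume x: "x \<in> carrier V"
    then have "x = (x \<ominus> e x) \<oplus> e x" using split(1) by (simp add: a_comm mhom_closed[OF e])
    then show "\<exists>n\<in>mker V V e. \<exists>l\<in>e ` carrier V. x = n \<oplus> l" using split(2) x by blast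
  qed (use img ker disjoint in auto)
qed

lemma complement_component:
  assumes N: "is_submod A V N" and L: "is_submod A V L" and NL: "N \<inter> L = {\<zero>}"
    and dec: "\<And>x. x \<in> carrier V \<Longrightarrow> \<exists>n\<in>N. \<exists>l\<in>L. x = n \<oplus> l"
  obtains p where "\<And>x. x \<in> carrier V \<Longrightarrow> p x \<in> N \<and> (\<exists>l\<in>L. x = p x \<oplus> l)"
    "\<And>x n l. x \<in> carrier V \<Longrightarrow> n \<in> N \<Longrightarrow> l \<in> L \<Longrightarrow> x = n \<oplus> l \<Longrightarrow> p x = n"
    "\<And>x. x \<notin> carrier V \<Longrightarrow> p x = undefined"
proof -
  have NV: "N \<subseteq> carrier V" and LV: "L \<subseteq> carrier V" using N L by (auto simp: is_submod_def)
  have unique: "n = n'" if "n \<in> N" "n' \<in> N" "l \<in> L" "l' \<in> L" "n \<oplus> l = n' \<oplus> l'" for n n' l l'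
  proof -
    have c: "n \<in> carrier V" "n' \<in> carrier V" "l \<in> carrier V" "l' \<in> carrier V"
      using that NV LV by auto
    have "n \<ominus> n' = (n \<oplus> l) \<ominus> (n' \<oplus> l)" using c minus_add_minus minus_self by simp
    also have "\<dots> = l' \<ominus> l" using c that(5) minus_add_minus minus_self by (simp add: a_comm)
    finally have "n \<ominus> n' \<in> N \<inter> L"
      using N L that unfolding is_submod_def a_minus_def by (metis IntI)
    then show ?thesis using NL c minus_eq_zero_iff by auto
  qed
  define p where "p = (\<lambda>x\<in>carrier V. SOME n. n \<in> N \<and> (\<exists>l\<in>L. x = n \<oplus> l))"
  have p_dec: "p x \<in> N \<and> (\<exists>l\<in>L. x = p x \<oplus> l)" if x: "x \<in> carrier V" for x
  proof -
    have "\<exists>n. n \<in> N \<and> (\<exists>l\<in>L. x = n \<oplus> l)" using dec[OF x] by blast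
    from someI_ex[OF this] show ?thesis using x by (simp add: p_def)
  qed
  have p_eq: "p x = n" if "x \<in> carrier V" "n \<in> N" "l \<in> L" "x = n \<oplus> l" for x n l
  proof -
    from p_dec[OF that(1)] obtain l' where "p x \<in> N" "l' \<in> L" "x = p x \<oplus> l'" by blast
    then show ?thesis using unique[of "p x" n l' l] that by simp
  qed
  show ?thesis by (rule that[of p, OF p_dec p_eq]) (auto simp: p_def)
qed

lemma summand_projection:
  assumes "dsummand A V N"
  obtains p where "p \<in> endos" "\<And>x. x \<in> carrier V \<Longrightarrow> p x \<in> N" "\<And>x. x \<in> N \<Longrightarrow> p x = x"
proof -
  obtain L where N: "is_submod A V N" and L: "is_submod A V L" and NL: "N \<inter> L = {\<zero>}"
    and dec: "\<And>x. x \<in> carrier V \<Longrightarrow> \<exists>n\<in>N. \<exists>l\<in>L. x = n \<oplus> l"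
    using assms unfolding dsummand_def by blast
  have NV: "N \<subseteq> carrier V" and LV: "L \<subseteq> carrier V" using N L by (auto simp: is_submod_def)
  show ?thesis
  proof (rule complement_component[OF N L NL dec])
    fix p assume p_dec: "\<And>x. x \<in> carrier V \<Longrightarrow> p x \<in> N \<and> (\<exists>l\<in>L. x = p x \<oplus> l)"
      and p_eq: "\<And>x n l. x \<in> carrier V \<Longrightarrow> n \<in> N \<Longrightarrow> l \<in> L \<Longrightarrow> x = n \<oplus> l \<Longrightarrow> p x = n"
      and p_undef: "\<And>x. x \<notin> carrier V \<Longrightarrow> p x = undefined"
    have "p \<in> endos"
    proof (rule mhomI)
      show "p x \<in> carrier V" if "x \<in> carrier V" for x using p_dec[OF that] NV by blast
    next
      fix x y assume x: "x \<in> carrier V" and y: "y \<in> carrier V"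
      obtain lx where lx: "p x \<in> N" "lx \<in> L" "x = p x \<oplus> lx" using p_dec[OF x] by blast
      obtain ly where ly: "p y \<in> N" "ly \<in> L" "y = p y \<oplus> ly" using p_dec[OF y] by blast
      have c: "p x \<in> carrier V" "p y \<in> carrier V" "lx \<in> carrier V" "ly \<in> carrier V"
        using lx ly NV LV by auto
      have "x \<oplus> y = (p x \<oplus> p y) \<oplus> (lx \<oplus> ly)"
        by (subst lx(3), subst ly(3)) (simp add: c a_ac)
      moreover have "p x \<oplus> p y \<in> N" "lx \<oplus> ly \<in> L"
        using N L lx ly unfolding is_submod_def by blast+
      ultimately show "p (x \<oplus> y) = p x \<oplus> p y" using p_eq[of "x \<oplus> y"] x y by blast
    next
      fix a x assume a: "a \<in> carrier A" and x: "x \<in> carrier V"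
      obtain lx where lx: "p x \<in> N" "lx \<in> L" "x = p x \<oplus> lx" using p_dec[OF x] by blast
      have "smult V a x = smult V a (p x) \<oplus> smult V a lx"
        using lx NV LV a by (metis smult_add subsetD)
      moreover have "smult V a (p x) \<in> N" "smult V a lx \<in> L"
        using N L lx a unfolding is_submod_def by blast+
      ultimately show "p (smult V a x) = smult V a (p x)" using p_eq[of "smult V a x"] a x by blast
    qed (rule p_undef)
    moreover have "p x = x" if "x \<in> N" for x
    proof -
      have "\<zero> \<in> L" "x \<in> carrier V" using L NV that by (auto simp: is_submod_def)
      then show ?thesis using p_eq[of x x \<zero>] that by simp
    qed
    ultimately show ?thesis using that p_dec by blast
  qed
qed

lemma commuting_endo_image_fully_invariant:
  assumes "e \<in> endos" "\<And>h x. h \<in> endos \<Longrightarrow> x \<in> carrier V \<Longrightarrow> e (h x) = h (e x)"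
  shows "fully_invariant A V (e ` carrier V)"
  unfolding fully_invariant_def
proof (intro ballI subsetI)
  fix h y assume h: "h \<in> endos" and "y \<in> h ` e ` carrier V"
  then obtain x where x: "x \<in> carrier V" "y = h (e x)" by blast
  then have "y = e (h x)" using assms(2)[OF h x(1)] by simp
  then show "y \<in> e ` carrier V" using mhom_closed[OF h x(1)] by blast
qed

lemma commuting_endo_kernel_fully_invariant:
  assumes "e \<in> endos" "\<And>h x. h \<in> endos \<Longrightarrow> x \<in> carrier V \<Longrightarrow> e (h x) = h (e x)"
  shows "fully_invariant A V (mker V V e)"
  unfolding fully_invariant_def
proof (intro ballI subsetI)
  fix h y assume h: "h \<in> endos" and "y \<in> h ` mker V V e"
  then obtain x where x: "x \<in> carrier V" "e x = \<zero>" "y = h x" by (auto simp: mker_def)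
  then have "e y = \<zero>" using assms(2)[OF h x(1)] endo_zero[OF h] by simp
  then show "y \<in> mker V V e" using mhom_closed[OF h x(1)] x(3) by (simp add: mker_def)
qed

lemma endos_abelian_group:
  fixes H :: "('m \<Rightarrow> 'm, 'z) ring_scheme"
  assumes H: "carrier H = endos" "add H = (\<lambda>f g. \<lambda>x\<in>carrier V. f x \<oplus> g x)"
    "zero H = (\<lambda>x\<in>carrier V. \<zero>)"
  shows "abelian_group H"
proof (rule abelian_groupI)
  fix f g h assume "f \<in> carrier H" "g \<in> carrier H" "h \<in> carrier H"
  then have f: "f \<in> endos" and g: "g \<in> endos" and h: "h \<in> endos" using H by auto
  show "f \<oplus>\<^bsub>H\<^esub> g \<in> carrier H" using endo_add_fun[OF f g] H by simp
  show "f \<oplus>\<^bsub>H\<^esub> g \<oplus>\<^bsub>H\<^esub> h = f \<oplus>\<^bsub>H\<^esub> (g \<oplus>\<^bsub>H\<^esub> h)"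
    using mhom_closed[OF f] mhom_closed[OF g] mhom_closed[OF h] H
    by (auto simp: a_assoc intro!: restrict_ext)
  show "f \<oplus>\<^bsub>H\<^esub> g = g \<oplus>\<^bsub>H\<^esub> f"
    using mhom_closed[OF f] mhom_closed[OF g] H by (auto simp: a_comm intro!: restrict_ext)
next
  show "\<zero>\<^bsub>H\<^esub> \<in> carrier H" using endo_zero_fun H by simp
next
  fix f assume "f \<in> carrier H"
  then have f: "f \<in> endos" using H by simp
  show "\<zero>\<^bsub>H\<^esub> \<oplus>\<^bsub>H\<^esub> f = f"
    using H mhom_closed[OF f] mhom_undefined[OF f] by (auto simp: fun_eq_iff)
  show "\<exists>g\<in>carrier H. g \<oplus>\<^bsub>H\<^esub> f = \<zero>\<^bsub>H\<^esub>"
    using H mhom_closed[OF f] endo_a_inv_fun[OF f]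
    by (intro bexI[of _ "\<lambda>x\<in>carrier V. \<ominus> f x"]) (auto simp: l_neg intro!: restrict_ext)
qed

definition idempotent :: "('m \<Rightarrow> 'm) \<Rightarrow> bool" where
  "idempotent e \<longleftrightarrow> e \<in> endos \<and> (\<forall>x\<in>carrier V. e (e x) = e x)"

definition central_idempotent :: "('m \<Rightarrow> 'm) \<Rightarrow> bool" where
  "central_idempotent e \<longleftrightarrow> idempotent e \<and> (\<forall>h\<in>endos. \<forall>x\<in>carrier V. e (h x) = h (e x))"

lemma idempotent_complement:
  assumes "idempotent e"
  shows "idempotent (\<lambda>x\<in>carrier V. x \<ominus> e x)"
proof -
  have e: "e \<in> endos" and idem: "\<And>x. x \<in> carrier V \<Longrightarrow> e (e x) = e x"
    using assms by (auto simp: idempotent_def)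
  have "e (x \<ominus> e x) = \<zero>" if "x \<in> carrier V" for x
    using that endo_minus[OF e] idem mhom_closed[OF e] minus_self by simp
  then show ?thesis
    using complement_endo[OF e] mhom_closed[OF e] by (simp add: idempotent_def a_minus_def)
qed

lemma central_idempotent_summands:
  assumes "central_idempotent e"
  shows "dsummand A V (e ` carrier V) \<and> fully_invariant A V (e ` carrier V)"
    and "dsummand A V (mker V V e) \<and> fully_invariant A V (mker V V e)"
proof -
  have e: "e \<in> endos" and idem: "\<And>x. x \<in> carrier V \<Longrightarrow> e (e x) = e x"
    and comm: "\<And>h x. h \<in> endos \<Longrightarrow> x \<in> carrier V \<Longrightarrow> e (h x) = h (e x)"
    using assms unfolding central_idempotent_def idempotent_def by blast+
  show "dsummand A V (e ` carrier V) \<and> fully_invariant A V (e ` carrier V)"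
    by (rule conjI[OF idempotent_summands(1)[OF e idem] commuting_endo_image_fully_invariant[OF e comm]])
  show "dsummand A V (mker V V e) \<and> fully_invariant A V (mker V V e)"
    by (rule conjI[OF idempotent_summands(2)[OF e idem] commuting_endo_kernel_fully_invariant[OF e comm]])
qed

lemma central_idempotentI_corners:
  assumes corner: "\<And>e h x. idempotent e \<Longrightarrow> h \<in> endos \<Longrightarrow> x \<in> carrier V \<Longrightarrow> e (h (x \<ominus> e x)) = \<zero>"
    and e: "idempotent e"
  shows "central_idempotent e"
proof -
  have eE: "e \<in> endos" and idem: "\<And>x. x \<in> carrier V \<Longrightarrow> e (e x) = e x"
    using e by (auto simp: idempotent_def)
  define e' where "e' = (\<lambda>x\<in>carrier V. x \<ominus> e x)"
  have e': "idempotent e'" unfolding e'_def by (rule idempotent_complement[OF e])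
  have "e (h x) = h (e x)" if h: "h \<in> endos" and x: "x \<in> carrier V" for h x
  proof -
    have ex: "e x \<in> carrier V" and hx: "h x \<in> carrier V" and hex: "h (e x) \<in> carrier V"
      using mhom_closed[OF eE] mhom_closed[OF h] x by auto
    have "e (h x) \<ominus> e (h (e x)) = \<zero>"
      using corner[OF e h x] by (simp add: endo_minus[OF h x ex] endo_minus[OF eE hx hex])
    then have "e (h x) = e (h (e x))"
      using minus_eq_zero_iff mhom_closed[OF eE] hx hex by blast
    moreover have "x \<ominus> e' x = e x"
      using x ex by (simp add: e'_def minus_minus_cancel)
    then have "h (e x) \<ominus> e (h (e x)) = \<zero>"
      using corner[OF e' h x] hex by (simp add: e'_def)
    then have "h (e x) = e (h (e x))"
      using minus_eq_zero_iff mhom_closed[OF eE] hex by blast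
    ultimately show ?thesis by simp
  qed
  then show ?thesis using e by (simp add: central_idempotent_def)
qed

context
  fixes N assumes N: "is_submod A V N"

begin

lemma submod_subset: "N \<subseteq> carrier V"
  and submod_zero: "\<zero> \<in> N"
  and submod_add: "x \<in> N \<Longrightarrow> y \<in> N \<Longrightarrow> x \<oplus> y \<in> N"
  and submod_a_inv_closed: "x \<in> N \<Longrightarrow> \<ominus> x \<in> N"
  and submod_smult: "a \<in> carrier A \<Longrightarrow> x \<in> N \<Longrightarrow> smult V a x \<in> N"
  using N by (auto simp: is_submod_def)

lemma mcoset_mem_iff:
  assumes a: "a \<in> carrier V"
  shows "b \<in> mcoset V N a \<longleftrightarrow> b \<in> carrier V \<and> b \<ominus> a \<in> N"
proof
  assume "b \<in> mcoset V N a"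
  then obtain n where n: "n \<in> N" "b = a \<oplus> n" by (auto simp: mcoset_def)
  then have "n \<in> carrier V" using submod_subset by auto
  then show "b \<in> carrier V \<and> b \<ominus> a \<in> N" using n a add_minus_cancel_left by simp
next
  assume b: "b \<in> carrier V \<and> b \<ominus> a \<in> N"
  then have "b = a \<oplus> (b \<ominus> a)" using a minus_add_cancel[of b a] by (simp add: a_comm)
  then show "b \<in> mcoset V N a" using b by (auto simp: mcoset_def)
qed

lemma mcoset_self: "a \<in> carrier V \<Longrightarrow> a \<in> mcoset V N a"
  using mcoset_mem_iff[of a a] minus_self submod_zero by simp

lemma mcoset_eq_iff:
  assumes a: "a \<in> carrier V" and b: "b \<in> carrier V"
  shows "mcoset V N a = mcoset V N b \<longleftrightarrow> a \<ominus> b \<in> N"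
proof
  assume "mcoset V N a = mcoset V N b"
  then show "a \<ominus> b \<in> N" using mcoset_self[OF a] mcoset_mem_iff[OF b] by simp
next
  assume ab: "a \<ominus> b \<in> N"
  have ba: "b \<ominus> a \<in> N" using submod_a_inv_closed[OF ab] minus_minus_swap[OF a b] by simp
  have trans: "x \<ominus> z = (x \<ominus> y) \<oplus> (y \<ominus> z)"
    if "x \<in> carrier V" "y \<in> carrier V" "z \<in> carrier V" for x y z
    using that by (simp add: a_minus_def a_assoc r_neg1)
  show "mcoset V N a = mcoset V N b"
  proof (intro equalityI subsetI)
    fix x assume "x \<in> mcoset V N a"
    then have "x \<in> carrier V" "x \<ominus> a \<in> N" using mcoset_mem_iff[OF a] by auto
    then show "x \<in> mcoset V N b" using mcoset_mem_iff[OF b] trans[of x a b] a b submod_add ab by simp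
  next
    fix x assume "x \<in> mcoset V N b"
    then have "x \<in> carrier V" "x \<ominus> b \<in> N" using mcoset_mem_iff[OF b] by auto
    then show "x \<in> mcoset V N a" using mcoset_mem_iff[OF a] trans[of x b a] a b submod_add ba by simp
  qed
qed

lemma mcoset_zero: "mcoset V N \<zero> = N"
proof -
  have "(\<lambda>n. \<zero> \<oplus> n) ` N = (\<lambda>n. n) ` N" using submod_subset by (intro image_cong) auto
  then show ?thesis by (simp add: mcoset_def)
qed

lemma mcoset_eq_submod_iff: "a \<in> carrier V \<Longrightarrow> mcoset V N a = N \<longleftrightarrow> a \<in> N"
  using mcoset_eq_iff[of a \<zero>] mcoset_zero add_minus_cancel[of a \<zero>] by simp

lemma quot_mod_add:
  assumes a: "a \<in> carrier V" and b: "b \<in> carrier V"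
  shows "add (quot_mod V N) (mcoset V N a) (mcoset V N b) = mcoset V N (a \<oplus> b)"
proof -
  have "mcoset V N (a' \<oplus> b') = mcoset V N (a \<oplus> b)" if "a' \<in> mcoset V N a" "b' \<in> mcoset V N b" for a' b'
  proof -
    have a': "a' \<in> carrier V" "a' \<ominus> a \<in> N" and b': "b' \<in> carrier V" "b' \<ominus> b \<in> N"
      using that mcoset_mem_iff a b by auto
    then have "(a' \<oplus> b') \<ominus> (a \<oplus> b) \<in> N" using a b minus_add_minus submod_add by simp
    then show ?thesis using mcoset_eq_iff a b a' b' by simp
  qed
  then have "(\<Union>a'\<in>mcoset V N a. \<Union>b'\<in>mcoset V N b. mcoset V N (a' \<oplus> b')) =
      (\<Union>a'\<in>mcoset V N a. \<Union>b'\<in>mcoset V N b. mcoset V N (a \<oplus> b))"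
    by (intro SUP_cong refl) simp
  then show ?thesis using mcoset_self[OF a] mcoset_self[OF b] by (auto simp: quot_mod_def)
qed

lemma quot_mod_smult:
  assumes r: "r \<in> carrier A" and a: "a \<in> carrier V"
  shows "smult (quot_mod V N) r (mcoset V N a) = mcoset V N (smult V r a)"
proof -
  have "mcoset V N (smult V r a') = mcoset V N (smult V r a)" if "a' \<in> mcoset V N a" for a'
  proof -
    have a': "a' \<in> carrier V" "a' \<ominus> a \<in> N" using that mcoset_mem_iff a by auto
    then have "smult V r a' \<ominus> smult V r a \<in> N" using smult_minus[OF r a'(1) a] submod_smult[OF r] by metis
    then show ?thesis using mcoset_eq_iff r a a' by simp
  qed
  then have "(\<Union>a'\<in>mcoset V N a. mcoset V N (smult V r a')) = (\<Union>a'\<in>mcoset V N a. mcoset V N (smult V r a))"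
    by (intro SUP_cong refl) simp
  then show ?thesis using mcoset_self[OF a] by (auto simp: quot_mod_def)
qed

lemma quot_mod_carrier_cases:
  assumes "c \<in> carrier (quot_mod V N)"
  obtains a where "a \<in> carrier V" "c = mcoset V N a"
  using assms by (auto simp: quot_mod_def)

lemma mcoset_in_quot_mod: "a \<in> carrier V \<Longrightarrow> mcoset V N a \<in> carrier (quot_mod V N)"
  by (simp add: quot_mod_def)

lemma quot_mod_add_closed:
  "c \<in> carrier (quot_mod V N) \<Longrightarrow> d \<in> carrier (quot_mod V N) \<Longrightarrow>
     c \<oplus>\<^bsub>quot_mod V N\<^esub> d \<in> carrier (quot_mod V N)"
  by (elim quot_mod_carrier_cases) (simp add: quot_mod_add mcoset_in_quot_mod)

lemma quot_mod_smult_closed: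
  "r \<in> carrier A \<Longrightarrow> c \<in> carrier (quot_mod V N) \<Longrightarrow> smult (quot_mod V N) r c \<in> carrier (quot_mod V N)"
  by (elim quot_mod_carrier_cases) (simp add: quot_mod_smult mcoset_in_quot_mod)

lemma quot_lift_mcoset:
  assumes g: "g \<in> endos" "\<And>x. x \<in> N \<Longrightarrow> g x = \<zero>" and a: "a \<in> carrier V"
  shows "quot_lift V N g (mcoset V N a) = g a"
proof -
  define a' where "a' = (SOME a'. a' \<in> mcoset V N a)"
  have "a' \<in> mcoset V N a" unfolding a'_def using mcoset_self[OF a] by (rule someI)
  then have a': "a' \<in> carrier V" "a' \<ominus> a \<in> N" using mcoset_mem_iff[OF a] by auto
  then have "g a' \<ominus> g a = \<zero>" using g endo_minus a by metis
  then have "g a' = g a" using minus_eq_zero_iff mhom_closed[OF g(1)] a a' by blast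
  then show ?thesis using mcoset_in_quot_mod[OF a] by (simp add: quot_lift_def a'_def)
qed

lemma quot_lift_mhom:
  assumes g: "g \<in> endos" "\<And>x. x \<in> N \<Longrightarrow> g x = \<zero>"
  shows "quot_lift V N g \<in> mhom A (quot_mod V N) V"
proof (rule mhomI)
  fix c assume "c \<in> carrier (quot_mod V N)"
  then show "quot_lift V N g c \<in> carrier V"
    by (elim quot_mod_carrier_cases) (simp add: quot_lift_mcoset[OF g] mhom_closed[OF g(1)])
next
  fix c assume "c \<notin> carrier (quot_mod V N)"
  then show "quot_lift V N g c = undefined" by (simp add: quot_lift_def)
next
  fix c d assume "c \<in> carrier (quot_mod V N)" "d \<in> carrier (quot_mod V N)"
  then show "quot_lift V N g (c \<oplus>\<^bsub>quot_mod V N\<^esub> d) = quot_lift V N g c \<oplus> quot_lift V N g d"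
    by (elim quot_mod_carrier_cases) (simp add: quot_mod_add quot_lift_mcoset[OF g] mhom_add[OF g(1)])
next
  fix r c assume r: "r \<in> carrier A" and "c \<in> carrier (quot_mod V N)"
  then show "quot_lift V N g (smult (quot_mod V N) r c) = smult V r (quot_lift V N g c)"
    by (elim quot_mod_carrier_cases) (simp add: quot_mod_smult quot_lift_mcoset[OF g] mhom_smult[OF g(1)])
qed

lemma quot_mhom_mcoset_endo:
  assumes h: "h \<in> mhom A (quot_mod V N) V"
  shows "(\<lambda>x\<in>carrier V. h (mcoset V N x)) \<in> endos"
proof (rule mhomI)
  fix x y assume "x \<in> carrier V" "y \<in> carrier V"
  then show "(\<lambda>x\<in>carrier V. h (mcoset V N x)) (x \<oplus> y) =
      (\<lambda>x\<in>carrier V. h (mcoset V N x)) x \<oplus> (\<lambda>x\<in>carrier V. h (mcoset V N x)) y"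
    using mhom_add[OF h] mcoset_in_quot_mod by (simp flip: quot_mod_add)
next
  fix r x assume "r \<in> carrier A" "x \<in> carrier V"
  then show "(\<lambda>x\<in>carrier V. h (mcoset V N x)) (smult V r x) = smult V r ((\<lambda>x\<in>carrier V. h (mcoset V N x)) x)"
    using mhom_smult[OF h] mcoset_in_quot_mod by (simp flip: quot_mod_smult)
qed (simp_all add: mhom_closed[OF h] mcoset_in_quot_mod)

lemma quot_mhom_zero:
  assumes h: "h \<in> mhom A (quot_mod V N) V"
  shows "h N = \<zero>"
proof -
  have "h N \<oplus> h N = h N"
    using mhom_add[OF h, of N N] quot_mod_add[of \<zero> \<zero>] mcoset_zero mcoset_in_quot_mod[of \<zero>] by simp
  then show ?thesis using mhom_closed[OF h] mcoset_in_quot_mod[of \<zero>] mcoset_zero by simp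
qed

end

end

locale right_module =
  fixes R :: "'r ring" and M :: "('r, 'm) module" (structure)
  assumes rmod: "rmod R M"
begin

sublocale additive_action M "opp R"
  using rmod unfolding rmod_def lmod_def additive_action_def additive_action_axioms_def by auto

abbreviation S :: "('m \<Rightarrow> 'm) ring" where
  "S \<equiv> End_ring (opp R) M"

lemma S_simps [simp]:
  "carrier S = endos"
  "x \<in> carrier M \<Longrightarrow> mult S f g x = f (g x)"
  "x \<in> carrier M \<Longrightarrow> add S f g x = f x \<oplus> g x"
  "x \<in> carrier M \<Longrightarrow> one S x = x"
  "x \<in> carrier M \<Longrightarrow> zero S x = \<zero>"
  by (simp_all add: End_ring_simps)

lemma S_closed [simp]:
  "f \<in> endos \<Longrightarrow> g \<in> endos \<Longrightarrow> mult S f g \<in> endos"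
  "f \<in> endos \<Longrightarrow> g \<in> endos \<Longrightarrow> add S f g \<in> endos"
  "one S \<in> endos" "zero S \<in> endos"
  by (simp_all add: End_ring_simps endo_comp endo_add_fun endo_id endo_zero_fun)

lemma S_eq_iff: "f \<in> endos \<Longrightarrow> g \<in> endos \<Longrightarrow> f = g \<longleftrightarrow> (\<forall>x\<in>carrier M. f x = g x)"
  using mhom_eqI[of f "opp R" M M g] by auto

lemma S_one_mult [simp]: "f \<in> endos \<Longrightarrow> mult S (one S) f = f"
  and S_mult_one [simp]: "f \<in> endos \<Longrightarrow> mult S f (one S) = f"
  by (simp_all add: S_eq_iff mhom_closed)

lemma S_mult_eq_zero_iff:
  "f \<in> endos \<Longrightarrow> g \<in> endos \<Longrightarrow> mult S f g = zero S \<longleftrightarrow> (\<forall>x\<in>carrier M. f (g x) = \<zero>)"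
  by (subst S_eq_iff) (auto simp: mhom_closed)

lemma End_rmod_action: "additive_action (ring_rmod S) (opp S)"
proof -
  interpret abelian_group "ring_rmod S" by (rule endos_abelian_group) (simp_all add: End_ring_simps)
  show ?thesis
    by unfold_locales (auto simp: S_eq_iff mhom_closed)
qed

lemma End_lmod_action: "additive_action (ring_lmod S) S"
proof -
  interpret abelian_group "ring_lmod S" by (rule endos_abelian_group) (simp_all add: End_ring_simps)
  show ?thesis
    by unfold_locales (auto simp: S_eq_iff mhom_closed mhom_add)
qed

lemma End_rmod_endo_eq_left_mult:
  assumes "\<phi> \<in> mhom (opp S) (ring_rmod S) (ring_rmod S)" "t \<in> endos"
  shows "\<phi> t = mult S (\<phi> (one S)) t"
  using mhom_smult[OF assms(1), of t "one S"] assms(2) by (simp add: S_eq_iff)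

lemma End_lmod_endo_eq_right_mult:
  assumes "\<phi> \<in> mhom S (ring_lmod S) (ring_lmod S)" "t \<in> endos"
  shows "\<phi> t = mult S t (\<phi> (one S))"
  using mhom_smult[OF assms(1), of t "one S"] assms(2) by (simp add: S_eq_iff)

lemma left_mult_End_rmod_endo:
  "f \<in> endos \<Longrightarrow> (\<lambda>t\<in>carrier S. mult S f t) \<in> mhom (opp S) (ring_rmod S) (ring_rmod S)"
  by (rule mhomI) (auto simp: S_eq_iff mhom_closed mhom_add)

lemma right_mult_End_lmod_endo:
  "f \<in> endos \<Longrightarrow> (\<lambda>t\<in>carrier S. mult S t f) \<in> mhom S (ring_lmod S) (ring_lmod S)"
  by (rule mhomI) (auto simp: S_eq_iff mhom_closed)

section \<open>Idempotents of a strongly self-Rickart endomorphism ring\<close>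

text \<open>right_ann_generator f e: e is a central idempotent with r(f) = eS in S = End(M);
  left_ann_generator f e: e is a central idempotent with l(f) = Se.\<close>

definition right_ann_generator :: "('m \<Rightarrow> 'm) \<Rightarrow> ('m \<Rightarrow> 'm) \<Rightarrow> bool" where
  "right_ann_generator f e \<longleftrightarrow> central_idempotent e \<and> (\<forall>x\<in>carrier M. f (e x) = \<zero>) \<and>
     (\<forall>g\<in>endos. (\<forall>x\<in>carrier M. f (g x) = \<zero>) \<longrightarrow> (\<forall>x\<in>carrier M. e (g x) = g x))"

definition left_ann_generator :: "('m \<Rightarrow> 'm) \<Rightarrow> ('m \<Rightarrow> 'm) \<Rightarrow> bool" where
  "left_ann_generator f e \<longleftrightarrow> central_idempotent e \<and> (\<forall>x\<in>carrier M. e (f x) = \<zero>) \<and>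
     (\<forall>g\<in>endos. (\<forall>x\<in>carrier M. g (f x) = \<zero>) \<longrightarrow> (\<forall>x\<in>carrier M. g (e x) = g x))"

lemma End_rmod_summand_generator:
  assumes "dsummand (opp S) (ring_rmod S) K"
  obtains e where "e \<in> K" "\<And>g. g \<in> K \<Longrightarrow> mult S e g = g"
proof -
  interpret SR: additive_action "ring_rmod S" "opp S" by (rule End_rmod_action)
  obtain \<pi> where \<pi>: "\<pi> \<in> mhom (opp S) (ring_rmod S) (ring_rmod S)"
    "\<And>t. t \<in> carrier (ring_rmod S) \<Longrightarrow> \<pi> t \<in> K" "\<And>t. t \<in> K \<Longrightarrow> \<pi> t = t"
    by (rule SR.summand_projection[OF assms]) blast
  have "K \<subseteq> endos" using assms by (simp add: dsummand_def is_submod_def)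
  then have "mult S (\<pi> (one S)) g = g" if "g \<in> K" for g
    using End_rmod_endo_eq_left_mult[OF \<pi>(1), of g] \<pi>(3)[OF that] that by auto
  moreover have "\<pi> (one S) \<in> K" using \<pi>(2) by simp
  ultimately show ?thesis using that by blast
qed

lemma End_lmod_summand_generator:
  assumes "dsummand S (ring_lmod S) K"
  obtains e where "e \<in> K" "\<And>g. g \<in> K \<Longrightarrow> mult S g e = g"
proof -
  interpret SL: additive_action "ring_lmod S" S by (rule End_lmod_action)
  obtain \<pi> where \<pi>: "\<pi> \<in> mhom S (ring_lmod S) (ring_lmod S)"
    "\<And>t. t \<in> carrier (ring_lmod S) \<Longrightarrow> \<pi> t \<in> K" "\<And>t. t \<in> K \<Longrightarrow> \<pi> t = t"
    by (rule SL.summand_projection[OF assms]) blast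
  have "K \<subseteq> endos" using assms by (simp add: dsummand_def is_submod_def)
  then have "mult S g (\<pi> (one S)) = g" if "g \<in> K" for g
    using End_lmod_endo_eq_right_mult[OF \<pi>(1), of g] \<pi>(3)[OF that] that by auto
  moreover have "\<pi> (one S) \<in> K" using \<pi>(2) by simp
  ultimately show ?thesis using that by blast
qed

text \<open>Both one-sided versions of strong self-Rickartness of S force e S (1 - e) = 0 for every
  idempotent e, which makes every idempotent central.\<close>

lemma End_rmod_ssr_corner_zero:
  assumes ssr: "strongly_self_rickart (opp S) (ring_rmod S)" and e: "idempotent e"
    and h: "h \<in> endos" and x: "x \<in> carrier M"
  shows "e (h (x \<ominus> e x)) = \<zero>"
proof -
  have eE: "e \<in> endos" using e by (simp add: idempotent_def)
  define e' where "e' = (\<lambda>x\<in>carrier M. x \<ominus> e x)"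
  have e'E: "e' \<in> endos" using idempotent_complement[OF e] by (simp add: e'_def idempotent_def)
  let ?K = "mker (ring_rmod S) (ring_rmod S) (\<lambda>t\<in>carrier S. mult S e t)"
  have "e (e' y) = \<zero>" if "y \<in> carrier M" for y
    using that e mhom_closed[OF eE] endo_minus[OF eE] minus_self
    by (simp add: e'_def idempotent_def)
  then have "e' \<in> ?K" using e'E eE by (simp add: mker_def S_mult_eq_zero_iff)
  moreover have "fully_invariant (opp S) (ring_rmod S) ?K"
    using ssr left_mult_End_rmod_endo[OF eE] by (simp add: strongly_self_rickart_def)
  ultimately have "(\<lambda>t\<in>carrier S. mult S h t) e' \<in> ?K"
    using left_mult_End_rmod_endo[OF h] unfolding fully_invariant_def by blast
  then have "mult S e (mult S h e') = zero S" using e'E h by (simp add: mker_def)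
  then have "e (mult S h e' x) = \<zero>"
    using S_mult_eq_zero_iff[of e "mult S h e'"] eE h e'E x by simp
  then show ?thesis using x mhom_closed[OF eE x] by (simp add: e'_def)
qed

lemma End_lmod_ssr_corner_zero:
  assumes ssr: "strongly_self_rickart S (ring_lmod S)" and e: "idempotent e"
    and h: "h \<in> endos" and x: "x \<in> carrier M"
  shows "e (h (x \<ominus> e x)) = \<zero>"
proof -
  have eE: "e \<in> endos" using e by (simp add: idempotent_def)
  define e' where "e' = (\<lambda>x\<in>carrier M. x \<ominus> e x)"
  have e'E: "e' \<in> endos" using idempotent_complement[OF e] by (simp add: e'_def idempotent_def)
  let ?K = "mker (ring_lmod S) (ring_lmod S) (\<lambda>t\<in>carrier S. mult S t e')"
  have "e (e' y) = \<zero>" if "y \<in> carrier M" for y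
    using that e mhom_closed[OF eE] endo_minus[OF eE] minus_self
    by (simp add: e'_def idempotent_def)
  then have "e \<in> ?K" using e'E eE by (simp add: mker_def S_mult_eq_zero_iff)
  moreover have "fully_invariant S (ring_lmod S) ?K"
    using ssr right_mult_End_lmod_endo[OF e'E] by (simp add: strongly_self_rickart_def)
  ultimately have "(\<lambda>t\<in>carrier S. mult S t h) e \<in> ?K"
    using right_mult_End_lmod_endo[OF h] unfolding fully_invariant_def by blast
  then have "mult S (mult S e h) e' = zero S" using eE h by (simp add: mker_def)
  then have "mult S e h (e' x) = \<zero>"
    using S_mult_eq_zero_iff[of "mult S e h" e'] eE h e'E x by simp
  then show ?thesis using x mhom_closed[OF eE x] mhom_closed[OF h] by (simp add: e'_def)
qed

lemma End_rmod_ssr_right_ann_generator: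
  assumes ssr: "strongly_self_rickart (opp S) (ring_rmod S)" and f: "f \<in> endos"
  obtains e where "right_ann_generator f e"
proof -
  let ?K = "mker (ring_rmod S) (ring_rmod S) (\<lambda>t\<in>carrier S. mult S f t)"
  have K: "?K = {t \<in> endos. \<forall>x\<in>carrier M. f (t x) = \<zero>}"
    using f by (auto simp: mker_def S_mult_eq_zero_iff)
  have "dsummand (opp S) (ring_rmod S) ?K"
    using ssr left_mult_End_rmod_endo[OF f] by (simp add: strongly_self_rickart_def)
  then obtain e where e: "e \<in> ?K" and gen: "\<And>g. g \<in> ?K \<Longrightarrow> mult S e g = g"
    by (rule End_rmod_summand_generator) blast
  have eE: "e \<in> endos" and fe: "\<forall>x\<in>carrier M. f (e x) = \<zero>" using e K by auto
  have fix_ann: "\<forall>x\<in>carrier M. e (g x) = g x" if "g \<in> endos" "\<forall>x\<in>carrier M. f (g x) = \<zero>" for g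
    using gen[of g] that eE K by (simp add: S_eq_iff)
  have "idempotent e" using fix_ann[OF eE fe] eE by (simp add: idempotent_def)
  then have "central_idempotent e"
    using central_idempotentI_corners End_rmod_ssr_corner_zero[OF ssr] by blast
  with fe fix_ann show ?thesis by (intro that[of e]) (simp add: right_ann_generator_def)
qed

lemma End_lmod_ssr_left_ann_generator:
  assumes ssr: "strongly_self_rickart S (ring_lmod S)" and f: "f \<in> endos"
  obtains e where "left_ann_generator f e"
proof -
  let ?K = "mker (ring_lmod S) (ring_lmod S) (\<lambda>t\<in>carrier S. mult S t f)"
  have K: "?K = {t \<in> endos. \<forall>x\<in>carrier M. t (f x) = \<zero>}"
    using f by (auto simp: mker_def S_mult_eq_zero_iff)
  have "dsummand S (ring_lmod S) ?K"
    using ssr right_mult_End_lmod_endo[OF f] by (simp add: strongly_self_rickart_def)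
  then obtain e where e: "e \<in> ?K" and gen: "\<And>g. g \<in> ?K \<Longrightarrow> mult S g e = g"
    by (rule End_lmod_summand_generator) blast
  have eE: "e \<in> endos" and ef: "\<forall>x\<in>carrier M. e (f x) = \<zero>" using e K by auto
  have fix_ann: "\<forall>x\<in>carrier M. g (e x) = g x" if "g \<in> endos" "\<forall>x\<in>carrier M. g (f x) = \<zero>" for g
    using gen[of g] that eE K by (simp add: S_eq_iff)
  have "idempotent e" using fix_ann[OF eE ef] eE by (simp add: idempotent_def)
  then have "central_idempotent e"
    using central_idempotentI_corners End_lmod_ssr_corner_zero[OF ssr] by blast
  with ef fix_ann show ?thesis by (intro that[of e]) (simp add: left_ann_generator_def)
qed

section \<open>Strongly self-Rickart modules\<close>

lemma kernel_summand_if_fixed: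
  assumes e: "right_ann_generator f e" and fixed: "\<forall>x\<in>mker M M f. e x = x"
  shows "dsummand (opp R) M (mker M M f) \<and> fully_invariant (opp R) M (mker M M f)"
proof -
  have ce: "central_idempotent e" and fe: "\<forall>x\<in>carrier M. f (e x) = \<zero>"
    using e by (auto simp: right_ann_generator_def)
  have "mker M M f = e ` carrier M"
  proof
    show "mker M M f \<subseteq> e ` carrier M"
      using fixed by (force simp: mker_def)
    have "e \<in> endos" using ce by (simp add: central_idempotent_def idempotent_def)
    then show "e ` carrier M \<subseteq> mker M M f"
      using fe mhom_closed by (auto simp: mker_def)
  qed
  then show ?thesis using central_idempotent_summands(1)[OF ce] by simp
qed

lemma End_rmod_endo_kernel:
  assumes \<phi>: "\<phi> \<in> mhom (opp S) (ring_rmod S) (ring_rmod S)"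
  shows "mker (ring_rmod S) (ring_rmod S) \<phi> = {s \<in> endos. \<forall>x\<in>carrier M. s x \<in> mker M M (\<phi> (one S))}"
proof -
  have t: "\<phi> (one S) \<in> endos" using mhom_closed[OF \<phi>, of "one S"] by simp
  have "\<phi> s = zero S \<longleftrightarrow> (\<forall>x\<in>carrier M. s x \<in> mker M M (\<phi> (one S)))" if s: "s \<in> endos" for s
    using End_rmod_endo_eq_left_mult[OF \<phi> s] S_mult_eq_zero_iff[OF t s] mhom_closed[OF s]
    by (auto simp: mker_def)
  then show ?thesis by (auto simp: mker_def)
qed

lemma End_rmod_summand_if_summand:
  assumes N: "dsummand (opp R) M N"
  shows "dsummand (opp S) (ring_rmod S) {s \<in> endos. \<forall>x\<in>carrier M. s x \<in> N}"
proof -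
  interpret SR: additive_action "ring_rmod S" "opp S" by (rule End_rmod_action)
  obtain p where p: "p \<in> endos" "\<And>x. x \<in> carrier M \<Longrightarrow> p x \<in> N" "\<And>x. x \<in> N \<Longrightarrow> p x = x"
    by (rule summand_projection[OF N]) blast
  let ?\<psi> = "\<lambda>s\<in>carrier S. mult S p s"
  have \<psi>: "?\<psi> \<in> SR.endos" by (rule left_mult_End_rmod_endo[OF p(1)])
  have "?\<psi> (?\<psi> s) = ?\<psi> s" if s: "s \<in> carrier (ring_rmod S)" for s
  proof -
    have sE: "s \<in> endos" using s by simp
    then show ?thesis using p mhom_closed[OF sE] by (simp add: S_eq_iff)
  qed
  then have "dsummand (opp S) (ring_rmod S) (?\<psi> ` carrier (ring_rmod S))"
    by (rule SR.idempotent_summands(1)[OF \<psi>])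
  moreover have "?\<psi> ` carrier (ring_rmod S) = {s \<in> endos. \<forall>x\<in>carrier M. s x \<in> N}"
  proof
    show "?\<psi> ` carrier (ring_rmod S) \<subseteq> {s \<in> endos. \<forall>x\<in>carrier M. s x \<in> N}"
      using p by (auto intro!: p(2) intro: mhom_closed)
    show "{s \<in> endos. \<forall>x\<in>carrier M. s x \<in> N} \<subseteq> ?\<psi> ` carrier (ring_rmod S)"
    proof
      fix s assume s: "s \<in> {s \<in> endos. \<forall>x\<in>carrier M. s x \<in> N}"
      then have "?\<psi> s = s" using p by (simp add: S_eq_iff)
      then show "s \<in> ?\<psi> ` carrier (ring_rmod S)" using s by (metis (lifting) image_eqI mem_Collect_eq ring_rmod_simps(1) S_simps(1))
    qed
  qed
  ultimately show ?thesis by simp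
qed

lemma End_rmod_fully_invariant_if_fully_invariant:
  assumes N: "fully_invariant (opp R) M N"
  shows "fully_invariant (opp S) (ring_rmod S) {s \<in> endos. \<forall>x\<in>carrier M. s x \<in> N}"
  unfolding fully_invariant_def
proof (intro ballI subsetI)
  fix h u assume h: "h \<in> mhom (opp S) (ring_rmod S) (ring_rmod S)"
    and "u \<in> h ` {s \<in> endos. \<forall>x\<in>carrier M. s x \<in> N}"
  then obtain s where s: "s \<in> endos" "\<forall>x\<in>carrier M. s x \<in> N" "u = h s" by auto
  have h1: "h (one S) \<in> endos" using mhom_closed[OF h, of "one S"] by simp
  have "u = mult S (h (one S)) s" using End_rmod_endo_eq_left_mult[OF h s(1)] s(3) by simp
  moreover have "\<forall>x\<in>carrier M. h (one S) (s x) \<in> N"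
    using N h1 s(2) unfolding fully_invariant_def by blast
  ultimately show "u \<in> {s \<in> endos. \<forall>x\<in>carrier M. s x \<in> N}" using s h1 by auto
qed

lemma End_rmod_ssr_if_ssr:
  assumes ssr: "strongly_self_rickart (opp R) M"
  shows "strongly_self_rickart (opp S) (ring_rmod S)"
  unfolding strongly_self_rickart_def
proof
  fix \<phi> assume \<phi>: "\<phi> \<in> mhom (opp S) (ring_rmod S) (ring_rmod S)"
  have "\<phi> (one S) \<in> endos" using mhom_closed[OF \<phi>, of "one S"] by simp
  then have "dsummand (opp R) M (mker M M (\<phi> (one S)))" "fully_invariant (opp R) M (mker M M (\<phi> (one S)))"
    using ssr by (auto simp: strongly_self_rickart_def)
  then show "dsummand (opp S) (ring_rmod S) (mker (ring_rmod S) (ring_rmod S) \<phi>) \<and>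
      fully_invariant (opp S) (ring_rmod S) (mker (ring_rmod S) (ring_rmod S) \<phi>)"
    unfolding End_rmod_endo_kernel[OF \<phi>]
    by (blast intro: End_rmod_summand_if_summand End_rmod_fully_invariant_if_fully_invariant)
qed

lemma right_ann_generator_fixes_kernel_valued:
  assumes e: "right_ann_generator f e" and h: "h \<in> mhom (opp R) M (submod M (mker M M f))"
    and x: "x \<in> carrier M"
  shows "e (h x) = h x"
proof -
  have "h \<in> endos" "\<forall>y\<in>carrier M. f (h y) = \<zero>"
    using h mhom_into_submod_iff[of "mker M M f" h] by (auto simp: mker_def)
  then show ?thesis using e x by (simp add: right_ann_generator_def)
qed

lemma ssr_iff_End_rmod_ssr_and:
  assumes retract: "\<And>f p. f \<in> endos \<Longrightarrow> p \<in> mhom (opp R) M (submod M (mker M M f)) \<Longrightarrow>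
      (\<And>x. x \<in> mker M M f \<Longrightarrow> p x = x) \<Longrightarrow> P f"
    and fixed: "\<And>f e. \<forall>g\<in>endos. P g \<Longrightarrow> f \<in> endos \<Longrightarrow> right_ann_generator f e \<Longrightarrow>
      \<forall>x\<in>mker M M f. e x = x"
  shows "strongly_self_rickart (opp R) M \<longleftrightarrow>
    strongly_self_rickart (opp S) (ring_rmod S) \<and> (\<forall>f\<in>carrier S. P f)"
proof
  assume ssr: "strongly_self_rickart (opp R) M"
  have "P f" if f: "f \<in> endos" for f
  proof -
    have "dsummand (opp R) M (mker M M f)" using ssr f by (simp add: strongly_self_rickart_def)
    then obtain p where "p \<in> endos" "\<And>x. x \<in> carrier M \<Longrightarrow> p x \<in> mker M M f"
      "\<And>x. x \<in> mker M M f \<Longrightarrow> p x = x"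
      by (rule summand_projection) blast
    then show ?thesis using retract[OF f] mhom_into_submod_iff[of "mker M M f" p] by (auto simp: mker_def)
  qed
  then show "strongly_self_rickart (opp S) (ring_rmod S) \<and> (\<forall>f\<in>carrier S. P f)"
    using End_rmod_ssr_if_ssr[OF ssr] by simp
next
  assume H: "strongly_self_rickart (opp S) (ring_rmod S) \<and> (\<forall>f\<in>carrier S. P f)"
  show "strongly_self_rickart (opp R) M"
    unfolding strongly_self_rickart_def
  proof
    fix f assume f: "f \<in> endos"
    obtain e where e: "right_ann_generator f e"
      using End_rmod_ssr_right_ann_generator[OF conjunct1[OF H] f] by blast
    show "dsummand (opp R) M (mker M M f) \<and> fully_invariant (opp R) M (mker M M f)"
      using kernel_summand_if_fixed[OF e fixed[OF _ f e]] H by simp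
  qed
qed

lemma ssr_iff_M_cyclic_kernels:
  "strongly_self_rickart (opp R) M \<longleftrightarrow> strongly_self_rickart (opp S) (ring_rmod S) \<and>
     (\<forall>f\<in>carrier S. M_cyclic R M (submod M (mker M M f)))"
proof (rule ssr_iff_End_rmod_ssr_and)
  fix f p assume p: "p \<in> mhom (opp R) M (submod M (mker M M f))" "\<And>x. x \<in> mker M M f \<Longrightarrow> p x = x"
  have "p ` carrier M = mker M M f"
  proof
    show "p ` carrier M \<subseteq> mker M M f" using mhom_closed[OF p(1)] by auto
    show "mker M M f \<subseteq> p ` carrier M"
    proof
      fix x assume "x \<in> mker M M f"
      then show "x \<in> p ` carrier M" using p(2)[of x] by (auto simp: mker_def intro!: image_eqI[of x])
    qed
  qed
  then show "M_cyclic R M (submod M (mker M M f))" using p(1) by (auto simp: M_cyclic_def)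
next
  fix f e assume P: "\<forall>g\<in>endos. M_cyclic R M (submod M (mker M M g))"
    and f: "f \<in> endos" and e: "right_ann_generator f e"
  obtain h where h: "h \<in> mhom (opp R) M (submod M (mker M M f))" "h ` carrier M = mker M M f"
    using P f by (auto simp: M_cyclic_def)
  show "\<forall>x\<in>mker M M f. e x = x"
  proof
    fix x assume "x \<in> mker M M f"
    then obtain y where "y \<in> carrier M" "x = h y" using h(2) by (metis imageE)
    then show "e x = x" using right_ann_generator_fixes_kernel_valued[OF e h(1)] by simp
  qed
qed

lemma ssr_iff_locally_split_kernels:
  "strongly_self_rickart (opp R) M \<longleftrightarrow> strongly_self_rickart (opp S) (ring_rmod S) \<and>
     (\<forall>f\<in>carrier S. incl_locally_split R M (mker M M f))"
proof (rule ssr_iff_End_rmod_ssr_and)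
  fix f p assume "p \<in> mhom (opp R) M (submod M (mker M M f))" "\<And>x. x \<in> mker M M f \<Longrightarrow> p x = x"
  then show "incl_locally_split R M (mker M M f)" by (auto simp: incl_locally_split_def)
next
  fix f e assume P: "\<forall>g\<in>endos. incl_locally_split R M (mker M M g)"
    and f: "f \<in> endos" and e: "right_ann_generator f e"
  show "\<forall>x\<in>mker M M f. e x = x"
  proof
    fix a assume a: "a \<in> mker M M f"
    then obtain h where h: "h \<in> mhom (opp R) M (submod M (mker M M f))" "h a = a"
      using P f unfolding incl_locally_split_def by blast
    have "a \<in> carrier M" using a by (simp add: mker_def)
    then show "e a = a" using right_ann_generator_fixes_kernel_valued[OF e h(1), of a] h(2) by simp
  qed
qed

lemma kernel_add_right_ann_generator:
  assumes e: "right_ann_generator f e" and f: "f \<in> endos"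
  shows "mker M M (add S f e) = {x \<in> mker M M f. e x = \<zero>}"
proof -
  have ce: "central_idempotent e" and fe: "\<forall>x\<in>carrier M. f (e x) = \<zero>"
    using e by (auto simp: right_ann_generator_def)
  have eE: "e \<in> endos" and idem: "\<And>x. x \<in> carrier M \<Longrightarrow> e (e x) = e x"
    and comm: "\<And>h x. h \<in> endos \<Longrightarrow> x \<in> carrier M \<Longrightarrow> e (h x) = h (e x)"
    using ce unfolding central_idempotent_def idempotent_def by blast+
  have "e z = \<zero>" if z: "z \<in> carrier M" "f z \<oplus> e z = \<zero>" for z
  proof -
    have "e (f z) \<oplus> e (e z) = \<zero>"
      using z mhom_add[OF eE] mhom_closed[OF f] mhom_closed[OF eE] endo_zero[OF eE] by metis
    then show ?thesis using comm[OF f z(1)] fe idem z(1) mhom_closed[OF eE] by simp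
  qed
  then show ?thesis using f eE mhom_closed[OF f] mhom_closed[OF eE] by (fastforce simp: mker_def)
qed

lemma kernel_fixed_if_k_quasi_retractable:
  assumes kqr: "\<forall>g\<in>endos. mker M M g \<noteq> {\<zero>} \<longrightarrow>
      (\<exists>h\<in>mhom (opp R) M (submod M (mker M M g)). \<exists>x\<in>carrier M. h x \<noteq> \<zero>)"
    and f: "f \<in> endos" and e: "right_ann_generator f e"
  shows "\<forall>x\<in>mker M M f. e x = x"
proof (rule ccontr)
  assume "\<not> (\<forall>x\<in>mker M M f. e x = x)"
  then obtain a where a: "a \<in> carrier M" "f a = \<zero>" "e a \<noteq> a" by (auto simp: mker_def)
  have eE: "e \<in> endos" and idem: "\<And>x. x \<in> carrier M \<Longrightarrow> e (e x) = e x"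
    and fe: "\<forall>x\<in>carrier M. f (e x) = \<zero>"
    using e unfolding right_ann_generator_def central_idempotent_def idempotent_def by blast+
  let ?g = "add S f e"
  have g: "?g \<in> endos" using f eE by simp
  have K: "mker M M ?g = {x \<in> mker M M f. e x = \<zero>}" by (rule kernel_add_right_ann_generator[OF e f])
  define y where "y = a \<ominus> e a"
  have "y \<in> mker M M ?g" "y \<noteq> \<zero>"
    using a fe idem mhom_closed[OF eE a(1)] minus_eq_zero_iff
    by (auto simp: K mker_def y_def endo_minus[OF f] endo_minus[OF eE] minus_self)
  then obtain h x where h: "h \<in> mhom (opp R) M (submod M (mker M M ?g))" and x: "x \<in> carrier M" "h x \<noteq> \<zero>"
    using kqr g by blast
  have hK: "h z \<in> mker M M f \<and> e (h z) = \<zero>" if "z \<in> carrier M" for z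
    using mhom_closed[OF h that] by (simp add: K)
  have "h \<in> mhom (opp R) M (submod M (mker M M f))"
    using h hK mhom_into_submod_iff[of _ h] by (auto simp: mker_def)
  then have "e (h x) = h x" by (rule right_ann_generator_fixes_kernel_valued[OF e _ x(1)])
  then show False using hK[OF x(1)] x(2) by simp
qed

lemma ssr_iff_k_quasi_retractable:
  "strongly_self_rickart (opp R) M \<longleftrightarrow> strongly_self_rickart (opp S) (ring_rmod S) \<and> k_quasi_retractable R M"
  unfolding k_quasi_retractable_def
proof (rule ssr_iff_End_rmod_ssr_and)
  fix f p assume f: "f \<in> endos" and p: "p \<in> mhom (opp R) M (submod M (mker M M f))"
    "\<And>x. x \<in> mker M M f \<Longrightarrow> p x = x"
  show "mker M M f \<noteq> {\<zero>} \<longrightarrow>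
      (\<exists>h\<in>mhom (opp R) M (submod M (mker M M f)). \<exists>x\<in>carrier M. h x \<noteq> \<zero>)"
  proof
    assume "mker M M f \<noteq> {\<zero>}"
    moreover have "\<zero> \<in> mker M M f" using endo_zero[OF f] by (simp add: mker_def)
    ultimately obtain a where a: "a \<in> mker M M f" "a \<noteq> \<zero>" by blast
    then have "a \<in> carrier M" "p a \<noteq> \<zero>" using p(2) by (auto simp: mker_def)
    then show "\<exists>h\<in>mhom (opp R) M (submod M (mker M M f)). \<exists>x\<in>carrier M. h x \<noteq> \<zero>"
      using p(1) by blast
  qed
next
  fix f e assume P: "\<forall>g\<in>endos. mker M M g \<noteq> {\<zero>} \<longrightarrow>
      (\<exists>h\<in>mhom (opp R) M (submod M (mker M M g)). \<exists>x\<in>carrier M. h x \<noteq> \<zero>)"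
    and f: "f \<in> endos" and e: "right_ann_generator f e"
  show "\<forall>x\<in>mker M M f. e x = x"
    using kernel_fixed_if_k_quasi_retractable[OF P f e] .
qed

end

lemma free_on_add: "a \<in> free_on Q \<Longrightarrow> b \<in> free_on Q \<Longrightarrow> a + b \<in> free_on Q"
  and free_on_diff: "a \<in> free_on Q \<Longrightarrow> b \<in> free_on Q \<Longrightarrow> a - b \<in> free_on Q"
proof -
  assume "a \<in> free_on Q" "b \<in> free_on Q"
  moreover have "{p. (a + b) p \<noteq> 0} \<subseteq> {p. a p \<noteq> 0} \<union> {p. b p \<noteq> 0}"
    and "{p. (a - b) p \<noteq> 0} \<subseteq> {p. a p \<noteq> 0} \<union> {p. b p \<noteq> 0}" by auto
  ultimately show "a + b \<in> free_on Q" "a - b \<in> free_on Q"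
    unfolding free_on_def by (auto intro: finite_subset)
qed

lemma free_on_delta: "q \<in> Q \<Longrightarrow> delta q \<in> free_on Q"
proof -
  have "{p. delta q p \<noteq> 0} = {q}" by (auto simp: delta_def)
  then show "q \<in> Q \<Longrightarrow> delta q \<in> free_on Q" unfolding free_on_def by simp
qed

lemma zspan_0: "0 \<in> zspan G"
  using zspan_zero[of G] by (simp add: zero_fun_def)

lemma zspan_add: "a \<in> zspan G \<Longrightarrow> b \<in> zspan G \<Longrightarrow> a + b \<in> zspan G"
  using zspan_diff[OF _ zspan_diff[OF zspan_0]] by fastforce

lemma zspan_scale: "a \<in> zspan G \<Longrightarrow> (\<lambda>q. n * a q) \<in> zspan G"
proof (induction n rule: int_induct[where k = 0])
  case base
  then show ?case using zspan_0 by (simp add: zero_fun_def)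
next
  case (step1 i)
  have "(\<lambda>q. (i + 1) * a q) = (\<lambda>q. i * a q) + a" by (auto simp: fun_eq_iff algebra_simps)
  then show ?case using step1 zspan_add by metis
next
  case (step2 i)
  have "(\<lambda>q. (i - 1) * a q) = (\<lambda>q. i * a q) - a" by (auto simp: fun_eq_iff algebra_simps)
  then show ?case using step2 zspan_diff by metis
qed

lemma free_on_subset_zspan_delta: "free_on Q \<subseteq> zspan (delta ` Q)"
proof
  fix c assume c: "c \<in> free_on Q"
  have "finite {q. c q \<noteq> 0}" using c by (simp add: free_on_def)
  then show "c \<in> zspan (delta ` Q)"
    using c
  proof (induction "{q. c q \<noteq> 0}" arbitrary: c rule: finite_induct)
    case empty
    then show ?case using zspan_0 by (simp add: zero_fun_def fun_eq_iff)
  next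
    case (insert q F)
    have q: "q \<in> Q" using insert.hyps(4) insert.prems by (auto simp: free_on_def)
    have supp: "{r. (c(q := 0)) r \<noteq> 0} = F" using insert.hyps(2,4) by auto
    moreover have "c(q := 0) \<in> free_on Q"
      using insert.prems insert.hyps(1,4) unfolding free_on_def mem_Collect_eq supp by auto
    ultimately have "c(q := 0) \<in> zspan (delta ` Q)" using insert.hyps(3) by simp
    moreover have "(\<lambda>r. c q * delta q r) \<in> zspan (delta ` Q)"
      using q by (intro zspan_scale zspan_gen) simp
    moreover have "c = c(q := 0) + (\<lambda>r. c q * delta q r)" by (auto simp: fun_eq_iff delta_def)
    ultimately show ?case by (metis zspan_add)
  qed
qed

definition free_ext :: "('a, 'b) ring_scheme \<Rightarrow> ('p \<Rightarrow> 'a) \<Rightarrow> ('p \<Rightarrow> int) \<Rightarrow> 'a" where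
  "free_ext G w c = finsum G (\<lambda>q. [c q] \<cdot>\<^bsub>G\<^esub> w q) {q. c q \<noteq> 0}"

lemma tens_eval_eq_free_ext: "tens_eval V = free_ext V (\<lambda>q. fst q (snd q))"
  by (simp add: fun_eq_iff tens_eval_def free_ext_def)

context abelian_group

begin

lemma int_pow_mem_subgroup:
  assumes T: "T \<subseteq> carrier G" "\<zero> \<in> T" "\<And>x y. x \<in> T \<Longrightarrow> y \<in> T \<Longrightarrow> x \<oplus> y \<in> T"
    "\<And>x. x \<in> T \<Longrightarrow> \<ominus> x \<in> T" and x: "x \<in> T"
  shows "[(n::int)] \<cdot> x \<in> T"
proof -
  have nat: "[(k::nat)] \<cdot> x \<in> T" for k
    by (induction k) (use T x in \<open>simp_all add: add.nat_pow_Suc\<close>)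
  show ?thesis
    using nat[of "nat n"] nat[of "nat (- n)"] T(4) add_pow_int_ge[of n G x] add_pow_int_lt[of n G x]
    by (cases "n \<ge> 0") simp_all
qed

lemma finsum_mem_subgroup:
  assumes T: "T \<subseteq> carrier G" "\<zero> \<in> T" "\<And>x y. x \<in> T \<Longrightarrow> y \<in> T \<Longrightarrow> x \<oplus> y \<in> T"
    and F: "finite F" and h: "\<And>i. i \<in> F \<Longrightarrow> h i \<in> T"
  shows "finsum G h F \<in> T"
  using F h
proof (induction F rule: finite_induct)
  case (insert a F)
  then have "finsum G h (insert a F) = h a \<oplus> finsum G h F"
    using T(1) by (intro finsum_insert) auto
  then show ?case using insert T by simp
qed (use T in simp)

lemma free_ext_mem_subgroup:
  assumes T: "T \<subseteq> carrier G" "\<zero> \<in> T" "\<And>x y. x \<in> T \<Longrightarrow> y \<in> T \<Longrightarrow> x \<oplus> y \<in> T"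
    "\<And>x. x \<in> T \<Longrightarrow> \<ominus> x \<in> T"
    and c: "c \<in> free_on Q" and w: "\<And>q. q \<in> Q \<Longrightarrow> w q \<in> T"
  shows "free_ext G w c \<in> T"
  unfolding free_ext_def
  using c w by (intro finsum_mem_subgroup[OF T(1-3)] int_pow_mem_subgroup[OF T]) (auto simp: free_on_def)

lemma free_ext_eq_finsum:
  assumes c: "c \<in> free_on Q" and w: "w \<in> Q \<rightarrow> carrier G"
    and F: "finite F" "{q. c q \<noteq> 0} \<subseteq> F" "F \<subseteq> Q"
  shows "free_ext G w c = finsum G (\<lambda>q. [c q] \<cdot> w q) F"
proof -
  have "[c q] \<cdot> w q \<in> carrier G" if "q \<in> F" for q
    using F w that add.int_pow_closed[of "w q" "c q"] by auto
  then show ?thesis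
    unfolding free_ext_def using F by (intro add.finprod_mono_neutral_cong_left) (auto simp: add_pow_def)
qed

lemma free_ext_add:
  assumes a: "a \<in> free_on Q" and b: "b \<in> free_on Q" and w: "w \<in> Q \<rightarrow> carrier G"
  shows "free_ext G w (a + b) = free_ext G w a \<oplus> free_ext G w b"
proof -
  define F where "F = {q. a q \<noteq> 0} \<union> {q. b q \<noteq> 0}"
  have F: "finite F" "F \<subseteq> Q" using a b by (auto simp: F_def free_on_def)
  have wF: "w q \<in> carrier G" if "q \<in> F" for q using F w that by auto
  then have terms: "(\<lambda>q. [k q] \<cdot> w q) \<in> F \<rightarrow> carrier G" for k :: "_ \<Rightarrow> int"
    by auto
  have "free_ext G w (a + b) = finsum G (\<lambda>q. [(a + b) q] \<cdot> w q) F"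
    by (rule free_ext_eq_finsum[OF free_on_add[OF a b] w F(1) _ F(2)]) (auto simp: F_def)
  also have "\<dots> = finsum G (\<lambda>q. [a q] \<cdot> w q \<oplus> [b q] \<cdot> w q) F"
    using wF by (intro finsum_cong') (auto simp: add.int_pow_mult)
  also have "\<dots> = finsum G (\<lambda>q. [a q] \<cdot> w q) F \<oplus> finsum G (\<lambda>q. [b q] \<cdot> w q) F"
    by (rule finsum_addf[OF terms terms])
  also have "\<dots> = free_ext G w a \<oplus> free_ext G w b"
    using free_ext_eq_finsum[OF a w F(1) _ F(2)] free_ext_eq_finsum[OF b w F(1) _ F(2)]
    by (simp add: F_def)
  finally show ?thesis .
qed

lemma free_ext_diff:
  assumes a: "a \<in> free_on Q" and b: "b \<in> free_on Q" and w: "w \<in> Q \<rightarrow> carrier G"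
  shows "free_ext G w (a - b) = free_ext G w a \<ominus> free_ext G w b"
proof -
  have closed: "free_ext G w c \<in> carrier G" if "c \<in> free_on Q" for c
    using that w by (intro free_ext_mem_subgroup[of "carrier G"]) auto
  have "free_ext G w a = free_ext G w (a - b) \<oplus> free_ext G w b"
    using free_ext_add[OF free_on_diff[OF a b] b w] by simp
  then show ?thesis using closed a b free_on_diff add_minus_cancel by metis
qed

lemma free_ext_delta:
  assumes q: "q \<in> Q" and w: "w \<in> Q \<rightarrow> carrier G"
  shows "free_ext G w (delta q) = w q"
proof -
  have "free_ext G w (delta q) = finsum G (\<lambda>r. [delta q r] \<cdot> w r) {q}"
    by (rule free_ext_eq_finsum[OF free_on_delta[OF q] w]) (auto simp: q delta_def)
  also have "\<dots> = [delta q q] \<cdot> w q \<oplus> finsum G (\<lambda>r. [delta q r] \<cdot> w r) {}"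
    using q w by (intro finsum_insert) auto
  also have "\<dots> = w q"
  proof -
    have wq: "w q \<in> carrier G" using q w by blast
    then show ?thesis using add.int_pow_1[OF wq] by (simp add: delta_def)
  qed
  finally show ?thesis .
qed

end

context right_module
begin

context
  fixes N assumes N: "is_submod (opp R) M N"

begin

lemma tens_term_mem:
  "q \<in> mhom (opp R) M (submod M N) \<times> carrier M \<Longrightarrow> fst q (snd q) \<in> N"
  by (auto dest: mhom_closed)

lemma tens_term_funcset:
  "(\<lambda>q. fst q (snd q)) \<in> mhom (opp R) M (submod M N) \<times> carrier M \<rightarrow> carrier (submod M N)"
  using tens_term_mem by auto

lemma tens_eval_mem:
  "c \<in> free_on (mhom (opp R) M (submod M N) \<times> carrier M) \<Longrightarrow> tens_eval (submod M N) c \<in> N"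
  unfolding tens_eval_eq_free_ext
  by (rule abelian_group.free_ext_mem_subgroup[OF submod_abelian_group[OF N]])
    (use tens_term_mem abelian_group.a_inv_closed[OF submod_abelian_group[OF N]] in
      \<open>auto simp: submod_add[OF N] submod_zero[OF N]\<close>)

lemma tens_eval_add:
  "a \<in> free_on (mhom (opp R) M (submod M N) \<times> carrier M) \<Longrightarrow>
   b \<in> free_on (mhom (opp R) M (submod M N) \<times> carrier M) \<Longrightarrow>
   tens_eval (submod M N) (a + b) = tens_eval (submod M N) a \<oplus> tens_eval (submod M N) b"
  unfolding tens_eval_eq_free_ext
  using abelian_group.free_ext_add[OF submod_abelian_group[OF N] _ _ tens_term_funcset] by simp

lemma tens_eval_diff:
  "a \<in> free_on (mhom (opp R) M (submod M N) \<times> carrier M) \<Longrightarrow>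
   b \<in> free_on (mhom (opp R) M (submod M N) \<times> carrier M) \<Longrightarrow>
   tens_eval (submod M N) (a - b) = tens_eval (submod M N) a \<ominus>\<^bsub>submod M N\<^esub> tens_eval (submod M N) b"
  unfolding tens_eval_eq_free_ext by (rule abelian_group.free_ext_diff[OF submod_abelian_group[OF N] _ _ tens_term_funcset])

lemma tens_eval_delta:
  "q \<in> mhom (opp R) M (submod M N) \<times> carrier M \<Longrightarrow> tens_eval (submod M N) (delta q) = fst q (snd q)"
  unfolding tens_eval_eq_free_ext by (rule abelian_group.free_ext_delta[OF submod_abelian_group[OF N] _ tens_term_funcset])

lemma tens_rel_kernel:
  assumes "r \<in> tens_rel R M (submod M N)"
  shows "r \<in> free_on (mhom (opp R) M (submod M N) \<times> carrier M) \<and> tens_eval (submod M N) r = \<zero>"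
proof -
  interpret V: abelian_group "submod M N" by (rule submod_abelian_group[OF N])
  let ?Q = "mhom (opp R) M (submod M N) \<times> carrier M" and ?ev = "tens_eval (submod M N)"
  have ev3: "a \<in> ?Q \<Longrightarrow> b \<in> ?Q \<Longrightarrow> c \<in> ?Q \<Longrightarrow> fst a (snd a) = fst b (snd b) \<oplus> fst c (snd c) \<Longrightarrow>
      delta a - delta b - delta c \<in> free_on ?Q \<and> ?ev (delta a - delta b - delta c) = \<zero>" for a b c
    using tens_term_mem[of b] tens_term_mem[of c]
      V.add_minus_cancel_left[of "fst b (snd b)" "fst c (snd c)"] V.minus_self[of "fst c (snd c)"]
    by (simp add: free_on_diff free_on_delta tens_eval_diff tens_eval_delta)
  have ev2: "a \<in> ?Q \<Longrightarrow> b \<in> ?Q \<Longrightarrow> fst a (snd a) = fst b (snd b) \<Longrightarrow>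
      delta a - delta b \<in> free_on ?Q \<and> ?ev (delta a - delta b) = \<zero>" for a b
    using tens_term_mem[of b] by (simp add: free_on_diff free_on_delta tens_eval_diff tens_eval_delta V.minus_self)
  have sum: "(\<lambda>y\<in>carrier M. g y \<oplus> g' y) \<in> mhom (opp R) M (submod M N)"
    if "g \<in> mhom (opp R) M (submod M N)" "g' \<in> mhom (opp R) M (submod M N)" for g g'
    using that mhom_into_submod_iff[OF submod_subset[OF N]] endo_add_fun submod_add[OF N] by auto
  have comp: "(\<lambda>y\<in>carrier M. g (s y)) \<in> mhom (opp R) M (submod M N)"
    if "g \<in> mhom (opp R) M (submod M N)" "s \<in> endos" for g s
    using that mhom_into_submod_iff[OF submod_subset[OF N]] endo_comp mhom_closed[OF that(2)] by auto
  from assms show ?thesis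
    unfolding tens_rel_def
  proof (elim UnE CollectE exE conjE)
    fix g g' m assume "r = delta (\<lambda>y\<in>carrier M. g y \<oplus>\<^bsub>submod M N\<^esub> g' y, m) - delta (g, m) - delta (g', m)"
      "g \<in> mhom (opp R) M (submod M N)" "g' \<in> mhom (opp R) M (submod M N)" "m \<in> carrier M"
    then show ?thesis using ev3 sum by simp
  next
    fix g m m' assume "r = delta (g, m \<oplus> m') - delta (g, m) - delta (g, m')"
      "g \<in> mhom (opp R) M (submod M N)" "m \<in> carrier M" "m' \<in> carrier M"
    then show ?thesis
      using ev3[of "(g, m \<oplus> m')" "(g, m)" "(g, m')"] mhom_add[of g "opp R" M "submod M N" m m'] by simp
  next
    fix g s m assume "r = delta (\<lambda>y\<in>carrier M. g (s y), m) - delta (g, s m)"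
      "g \<in> mhom (opp R) M (submod M N)" "s \<in> carrier (End_ring (opp R) M)" "m \<in> carrier M"
    then show ?thesis
      using ev2[of "(\<lambda>y\<in>carrier M. g (s y), m)" "(g, s m)"] comp[of g s] mhom_closed[of s "opp R" M M m]
      by simp
  qed
qed

lemma zspan_tens_rel_kernel:
  assumes "r \<in> zspan (tens_rel R M (submod M N))"
  shows "r \<in> free_on (mhom (opp R) M (submod M N) \<times> carrier M) \<and> tens_eval (submod M N) r = \<zero>"
proof -
  interpret V: abelian_group "submod M N" by (rule submod_abelian_group[OF N])
  from assms show ?thesis
  proof (induction rule: zspan.induct)
    case zspan_zero
    then show ?case by (simp add: free_on_def tens_eval_def)
  next
    case (zspan_gen r)
    then show ?case by (rule tens_rel_kernel)
  next
    case (zspan_diff a b)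
    then have "a - b \<in> free_on (mhom (opp R) M (submod M N) \<times> carrier M) \<and>
        tens_eval (submod M N) (a - b) = \<zero>"
      using V.minus_self[of \<zero>] submod_zero[OF N] by (simp add: free_on_diff tens_eval_diff)
    then show ?case by (simp only: fun_diff_def)
  qed
qed

text \<open>If p is a retraction of M onto N, then g \<otimes> m = (p \<circ> g) \<otimes> m = p \<otimes> g m for every generator,
  and the elements p \<otimes> x add up; so every element of the tensor product is p \<otimes> x, with x its
  image under the counit.\<close>

context
  fixes p assumes p: "p \<in> endos" "\<And>x. x \<in> carrier M \<Longrightarrow> p x \<in> N" "\<And>x. x \<in> N \<Longrightarrow> p x = x"

begin

lemma retraction_mhom: "p \<in> mhom (opp R) M (submod M N)"
  using p mhom_into_submod_iff[OF submod_subset[OF N]] by auto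

lemma retraction_rel_add:
  assumes "x \<in> carrier M" "y \<in> carrier M"
  shows "delta (p, x \<oplus> y) - delta (p, x) - delta (p, y) \<in> zspan (tens_rel R M (submod M N))"
proof (rule zspan_gen)
  show "delta (p, x \<oplus> y) - delta (p, x) - delta (p, y) \<in> tens_rel R M (submod M N)"
    unfolding tens_rel_def using retraction_mhom assms by (intro UnI1 UnI2) blast
qed

lemma retraction_rel_zero: "delta (p, \<zero>) \<in> zspan (tens_rel R M (submod M N))"
proof -
  have "delta (p, \<zero> \<oplus> \<zero>) - delta (p, \<zero>) - delta (p, \<zero>) \<in> zspan (tens_rel R M (submod M N))"
    by (rule retraction_rel_add) simp_all
  then have "0 - (delta (p, \<zero> \<oplus> \<zero>) - delta (p, \<zero>) - delta (p, \<zero>)) \<in> zspan (tens_rel R M (submod M N))"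
    by (rule zspan_diff[OF zspan_0])
  then show ?thesis by simp
qed

lemma retraction_rel_factor:
  assumes g: "g \<in> mhom (opp R) M (submod M N)" and m: "m \<in> carrier M"
  shows "delta (g, m) - delta (p, g m) \<in> zspan (tens_rel R M (submod M N))"
proof -
  have gE: "g \<in> endos" using g mhom_into_submod_iff[OF submod_subset[OF N]] by simp
  have "(\<lambda>y\<in>carrier M. p (g y)) = g"
    using p(3) mhom_closed[OF g] mhom_undefined[OF g] by (auto simp: fun_eq_iff)
  moreover have "delta (\<lambda>y\<in>carrier M. p (g y), m) - delta (p, g m) \<in> tens_rel R M (submod M N)"
    unfolding tens_rel_def
    by (intro UnI2 CollectI exI[of _ p] exI[of _ g] exI[of _ m]) (simp add: retraction_mhom gE m)
  ultimately show ?thesis by (metis zspan_gen)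
qed

lemma retraction_congruence:
  assumes c: "c \<in> free_on (mhom (opp R) M (submod M N) \<times> carrier M)"
  shows "c - delta (p, tens_eval (submod M N) c) \<in> zspan (tens_rel R M (submod M N))"
proof -
  interpret V: abelian_group "submod M N" by (rule submod_abelian_group[OF N])
  let ?Q = "mhom (opp R) M (submod M N) \<times> carrier M" and ?ev = "tens_eval (submod M N)"
    and ?Z = "zspan (tens_rel R M (submod M N))"
  have "d \<in> free_on ?Q \<and> d - delta (p, ?ev d) \<in> ?Z" if "d \<in> zspan (delta ` ?Q)" for d
    using that
  proof (induction rule: zspan.induct)
    case zspan_zero
    have ev0: "?ev 0 = \<zero>" by (simp add: tens_eval_def)
    have "0 - delta (p, \<zero>) \<in> ?Z" by (rule zspan_diff[OF zspan_0 retraction_rel_zero])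
    then show ?case unfolding zero_fun_def[symmetric] ev0 by (intro conjI) (simp add: free_on_def)
  next
    case (zspan_gen d)
    then obtain g m where gm: "g \<in> mhom (opp R) M (submod M N)" "m \<in> carrier M" "d = delta (g, m)"
      by blast
    then have ev: "?ev (delta (g, m)) = g m" using tens_eval_delta by simp
    show ?case unfolding gm(3) ev
      using retraction_rel_factor[OF gm(1,2)] free_on_delta[of "(g, m)" ?Q] gm(1,2) by blast
  next
    case (zspan_diff a b)
    then have ab: "a \<in> free_on ?Q" "b \<in> free_on ?Q" "a - b \<in> free_on ?Q" by (auto intro: free_on_diff)
    have IH: "a - delta (p, ?ev a) \<in> ?Z" "b - delta (p, ?ev b) \<in> ?Z"
      using conjunct2[OF zspan_diff.IH(1)] conjunct2[OF zspan_diff.IH(2)] by (simp_all only: fun_diff_def)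
    have ev: "?ev a = ?ev (a - b) \<oplus> ?ev b" using tens_eval_add[OF ab(3) ab(2)] by simp
    have "?ev (a - b) \<in> carrier M" "?ev b \<in> carrier M"
      using tens_eval_mem ab submod_subset[OF N] by auto
    then have "(a - delta (p, ?ev a)) - (b - delta (p, ?ev b))
        + (delta (p, ?ev (a - b) \<oplus> ?ev b) - delta (p, ?ev (a - b)) - delta (p, ?ev b)) \<in> ?Z"
      by (intro zspan_add[OF zspan.zspan_diff[OF IH] retraction_rel_add])
    moreover have "(a - delta (p, ?ev a)) - (b - delta (p, ?ev b))
        + (delta (p, ?ev (a - b) \<oplus> ?ev b) - delta (p, ?ev (a - b)) - delta (p, ?ev b))
        = (a - b) - delta (p, ?ev (a - b))"
      unfolding ev[symmetric] by (simp add: fun_eq_iff)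
    ultimately have "(a - b) - delta (p, ?ev (a - b)) \<in> ?Z" by simp
    then show ?case using ab(3) by (simp only: fun_diff_def)
  qed
  then show ?thesis using c free_on_subset_zspan_delta by blast
qed

lemma in_Stat_if_retraction: "in_Stat R M (submod M N)"
  unfolding in_Stat_def
proof
  let ?Q = "mhom (opp R) M (submod M N) \<times> carrier M" and ?ev = "tens_eval (submod M N)"
  have "x \<in> ?ev ` free_on ?Q" if "x \<in> N" for x
  proof -
    have q: "(p, x) \<in> ?Q" using retraction_mhom submod_subset[OF N] that by auto
    then have "?ev (delta (p, x)) = x" using tens_eval_delta p(3) that by simp
    then show ?thesis using free_on_delta[OF q] by (metis image_eqI)
  qed
  then show "?ev ` free_on ?Q = carrier (submod M N)" using tens_eval_mem by auto
  show "{c \<in> free_on ?Q. ?ev c = \<zero>\<^bsub>submod M N\<^esub>} = zspan (tens_rel R M (submod M N))"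
  proof
    show "zspan (tens_rel R M (submod M N)) \<subseteq> {c \<in> free_on ?Q. ?ev c = \<zero>\<^bsub>submod M N\<^esub>}"
      using zspan_tens_rel_kernel by auto
    show "{c \<in> free_on ?Q. ?ev c = \<zero>\<^bsub>submod M N\<^esub>} \<subseteq> zspan (tens_rel R M (submod M N))"
    proof
      fix c assume "c \<in> {c \<in> free_on ?Q. ?ev c = \<zero>\<^bsub>submod M N\<^esub>}"
      then have c: "c \<in> free_on ?Q" "?ev c = \<zero>" by auto
      then have "c - delta (p, \<zero>) \<in> zspan (tens_rel R M (submod M N))"
        using retraction_congruence[OF c(1)] by simp
      from zspan_add[OF this retraction_rel_zero] show "c \<in> zspan (tens_rel R M (submod M N))" by simp
    qed
  qed
qed

end

lemma submod_generated_if_in_Stat: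
  assumes Stat: "in_Stat R M (submod M N)"
    and T: "T \<subseteq> N" "\<zero> \<in> T" "\<And>x y. x \<in> T \<Longrightarrow> y \<in> T \<Longrightarrow> x \<oplus> y \<in> T" "\<And>x. x \<in> T \<Longrightarrow> \<ominus> x \<in> T"
    and gen: "\<And>h x. h \<in> mhom (opp R) M (submod M N) \<Longrightarrow> x \<in> carrier M \<Longrightarrow> h x \<in> T"
  shows "N \<subseteq> T"
proof
  let ?Q = "mhom (opp R) M (submod M N) \<times> carrier M"
  fix x assume "x \<in> N"
  then have "x \<in> tens_eval (submod M N) ` free_on ?Q" using Stat unfolding in_Stat_def by simp
  then obtain c where c: "c \<in> free_on ?Q" "x = tens_eval (submod M N) c" by blast
  show "x \<in> T" unfolding c(2) tens_eval_eq_free_ext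
  proof (rule abelian_group.free_ext_mem_subgroup[OF submod_abelian_group[OF N] _ _ _ _ c(1)])
    show "T \<subseteq> carrier (submod M N)" "\<zero>\<^bsub>submod M N\<^esub> \<in> T" using T(1,2) by simp_all
    show "y \<oplus>\<^bsub>submod M N\<^esub> z \<in> T" if "y \<in> T" "z \<in> T" for y z using T(3) that by simp
    show "\<ominus>\<^bsub>submod M N\<^esub> y \<in> T" if "y \<in> T" for y
      using that T(1,4) submod_a_inv[OF N] by auto
    show "fst q (snd q) \<in> T" if "q \<in> ?Q" for q using gen that by (auto simp: mem_Times_iff)
  qed
qed

end

lemma ssr_iff_Stat_kernels:
  "strongly_self_rickart (opp R) M \<longleftrightarrow> strongly_self_rickart (opp S) (ring_rmod S) \<and>
     (\<forall>f\<in>carrier S. in_Stat R M (submod M (mker M M f)))"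
proof (rule ssr_iff_End_rmod_ssr_and)
  fix f p assume f: "f \<in> endos" and p: "p \<in> mhom (opp R) M (submod M (mker M M f))"
    "\<And>x. x \<in> mker M M f \<Longrightarrow> p x = x"
  have "p \<in> endos" "\<And>x. x \<in> carrier M \<Longrightarrow> p x \<in> mker M M f"
    using p(1) mhom_into_submod_iff[of "mker M M f" p] by (auto simp: mker_def)
  then show "in_Stat R M (submod M (mker M M f))"
    using in_Stat_if_retraction[OF kernel_is_submod[OF f]] p(2) by blast
next
  fix f e assume P: "\<forall>g\<in>endos. in_Stat R M (submod M (mker M M g))"
    and f: "f \<in> endos" and e: "right_ann_generator f e"
  have eE: "e \<in> endos" using e by (simp add: right_ann_generator_def central_idempotent_def idempotent_def)
  let ?T = "{y \<in> mker M M f. e y = y}"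
  have "mker M M f \<subseteq> ?T"
  proof (rule submod_generated_if_in_Stat[OF kernel_is_submod[OF f]])
    show "in_Stat R M (submod M (mker M M f))" using P f by blast
    show "\<zero> \<in> ?T" using endo_zero[OF f] endo_zero[OF eE] by (simp add: mker_def)
    show "x \<oplus> y \<in> ?T" if "x \<in> ?T" "y \<in> ?T" for x y
      using that mhom_add[OF f] mhom_add[OF eE] by (simp add: mker_def)
    show "\<ominus> x \<in> ?T" if "x \<in> ?T" for x
      using that endo_a_inv[OF f] endo_a_inv[OF eE] by (simp add: mker_def)
    show "h x \<in> ?T" if "h \<in> mhom (opp R) M (submod M (mker M M f))" "x \<in> carrier M" for h x
      using right_ann_generator_fixes_kernel_valued[OF e that] mhom_closed[OF that] by simp
  qed auto
  then show "\<forall>x\<in>mker M M f. e x = x" by auto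
qed

end

section \<open>Dual strongly self-Rickart modules\<close>

context right_module
begin

lemma image_summand_if_kernel_contained:
  assumes e: "left_ann_generator f e" and f: "f \<in> endos"
    and contained: "\<forall>x\<in>carrier M. e x = \<zero> \<longrightarrow> x \<in> f ` carrier M"
  shows "dsummand (opp R) M (f ` carrier M) \<and> fully_invariant (opp R) M (f ` carrier M)"
proof -
  have ce: "central_idempotent e" and ef: "\<forall>x\<in>carrier M. e (f x) = \<zero>"
    using e by (auto simp: left_ann_generator_def)
  have "f ` carrier M = mker M M e"
    using contained ef mhom_closed[OF f] by (auto simp: mker_def)
  then show ?thesis using central_idempotent_summands(2)[OF ce] by simp
qed

lemma End_lmod_endo_kernel:
  assumes \<phi>: "\<phi> \<in> mhom S (ring_lmod S) (ring_lmod S)"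
  shows "mker (ring_lmod S) (ring_lmod S) \<phi> = {s \<in> endos. \<forall>x\<in>\<phi> (one S) ` carrier M. s x = \<zero>}"
proof -
  have t: "\<phi> (one S) \<in> endos" using mhom_closed[OF \<phi>, of "one S"] by simp
  have "\<phi> s = zero S \<longleftrightarrow> (\<forall>x\<in>\<phi> (one S) ` carrier M. s x = \<zero>)" if s: "s \<in> endos" for s
    using End_lmod_endo_eq_right_mult[OF \<phi> s] S_mult_eq_zero_iff[OF s t] by auto
  then show ?thesis by (auto simp: mker_def)
qed

lemma End_lmod_summand_if_summand:
  assumes J: "dsummand (opp R) M J"
  shows "dsummand S (ring_lmod S) {s \<in> endos. \<forall>x\<in>J. s x = \<zero>}"
proof -
  interpret SL: additive_action "ring_lmod S" S by (rule End_lmod_action)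
  obtain p where p: "p \<in> endos" "\<And>x. x \<in> carrier M \<Longrightarrow> p x \<in> J" "\<And>x. x \<in> J \<Longrightarrow> p x = x"
    by (rule summand_projection[OF J]) blast
  have JM: "J \<subseteq> carrier M" using J by (simp add: dsummand_def is_submod_def)
  let ?\<psi> = "\<lambda>s\<in>carrier S. mult S s p"
  have \<psi>: "?\<psi> \<in> SL.endos" by (rule right_mult_End_lmod_endo[OF p(1)])
  have "?\<psi> (?\<psi> s) = ?\<psi> s" if "s \<in> carrier (ring_lmod S)" for s
    using that p mhom_closed[OF p(1)] JM by (simp add: S_eq_iff subset_iff)
  then have "dsummand S (ring_lmod S) (mker (ring_lmod S) (ring_lmod S) ?\<psi>)"
    by (rule SL.idempotent_summands(2)[OF \<psi>])
  moreover have "(\<forall>x\<in>carrier M. s (p x) = \<zero>) \<longleftrightarrow> (\<forall>x\<in>J. s x = \<zero>)" for s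
    using p JM by (metis subsetD)
  then have "mker (ring_lmod S) (ring_lmod S) ?\<psi> = {s \<in> endos. \<forall>x\<in>J. s x = \<zero>}"
    using p by (auto simp: mker_def S_mult_eq_zero_iff)
  ultimately show ?thesis by simp
qed

lemma End_lmod_fully_invariant_if_fully_invariant:
  assumes J: "fully_invariant (opp R) M J" "J \<subseteq> carrier M"
  shows "fully_invariant S (ring_lmod S) {s \<in> endos. \<forall>x\<in>J. s x = \<zero>}"
  unfolding fully_invariant_def
proof (intro ballI subsetI)
  fix h u assume h: "h \<in> mhom S (ring_lmod S) (ring_lmod S)" and "u \<in> h ` {s \<in> endos. \<forall>x\<in>J. s x = \<zero>}"
  then obtain s where s: "s \<in> endos" "\<forall>x\<in>J. s x = \<zero>" "u = h s" by auto
  have h1: "h (one S) \<in> endos" using mhom_closed[OF h, of "one S"] by simp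
  have "u = mult S s (h (one S))" using End_lmod_endo_eq_right_mult[OF h s(1)] s(3) by simp
  moreover have "h (one S) x \<in> J" if "x \<in> J" for x
    using J(1) h1 that unfolding fully_invariant_def by blast
  ultimately show "u \<in> {s \<in> endos. \<forall>x\<in>J. s x = \<zero>}" using s h1 J(2) by auto
qed

lemma End_lmod_ssr_if_dssr:
  assumes dssr: "dual_strongly_self_rickart (opp R) M"
  shows "strongly_self_rickart S (ring_lmod S)"
  unfolding strongly_self_rickart_def
proof
  fix \<phi> assume \<phi>: "\<phi> \<in> mhom S (ring_lmod S) (ring_lmod S)"
  let ?J = "\<phi> (one S) ` carrier M"
  have t: "\<phi> (one S) \<in> endos" using mhom_closed[OF \<phi>, of "one S"] by simp
  then have "dsummand (opp R) M ?J" "fully_invariant (opp R) M ?J" "?J \<subseteq> carrier M"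
    using dssr mhom_closed[OF t] by (auto simp: dual_strongly_self_rickart_def)
  then show "dsummand S (ring_lmod S) (mker (ring_lmod S) (ring_lmod S) \<phi>) \<and>
      fully_invariant S (ring_lmod S) (mker (ring_lmod S) (ring_lmod S) \<phi>)"
    unfolding End_lmod_endo_kernel[OF \<phi>]
    by (blast intro: End_lmod_summand_if_summand End_lmod_fully_invariant_if_fully_invariant)
qed

lemma dssr_iff_End_lmod_ssr_and:
  assumes complement: "\<And>f p. f \<in> endos \<Longrightarrow> p \<in> endos \<Longrightarrow> (\<And>x. x \<in> carrier M \<Longrightarrow> p x \<in> f ` carrier M) \<Longrightarrow>
      (\<And>x. x \<in> f ` carrier M \<Longrightarrow> p x = x) \<Longrightarrow> P f"
    and contained: "\<And>f e. \<forall>g\<in>endos. P g \<Longrightarrow> f \<in> endos \<Longrightarrow> left_ann_generator f e \<Longrightarrow>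
      \<forall>x\<in>carrier M. e x = \<zero> \<longrightarrow> x \<in> f ` carrier M"
  shows "dual_strongly_self_rickart (opp R) M \<longleftrightarrow>
    strongly_self_rickart S (ring_lmod S) \<and> (\<forall>f\<in>carrier S. P f)"
proof
  assume dssr: "dual_strongly_self_rickart (opp R) M"
  have "P f" if f: "f \<in> endos" for f
  proof -
    have "dsummand (opp R) M (f ` carrier M)" using dssr f by (simp add: dual_strongly_self_rickart_def)
    then obtain p where "p \<in> endos" "\<And>x. x \<in> carrier M \<Longrightarrow> p x \<in> f ` carrier M"
      "\<And>x. x \<in> f ` carrier M \<Longrightarrow> p x = x"
      by (rule summand_projection) blast
    then show ?thesis by (rule complement[OF f])
  qed
  then show "strongly_self_rickart S (ring_lmod S) \<and> (\<forall>f\<in>carrier S. P f)"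
    using End_lmod_ssr_if_dssr[OF dssr] by simp
next
  assume H: "strongly_self_rickart S (ring_lmod S) \<and> (\<forall>f\<in>carrier S. P f)"
  show "dual_strongly_self_rickart (opp R) M"
    unfolding dual_strongly_self_rickart_def
  proof
    fix f assume f: "f \<in> endos"
    obtain e where e: "left_ann_generator f e"
      using End_lmod_ssr_left_ann_generator[OF conjunct1[OF H] f] by blast
    show "dsummand (opp R) M (f ` carrier M) \<and> fully_invariant (opp R) M (f ` carrier M)"
      using image_summand_if_kernel_contained[OF e f contained[OF _ f e]] H by simp
  qed
qed

lemma Coker_simps [simp]:
  "carrier (Coker M f) = mcoset M (f ` carrier M) ` carrier M"
  "zero (Coker M f) = f ` carrier M"
  by (simp_all add: Coker_def quot_mod_def)

lemma coker_apply: "x \<in> carrier M \<Longrightarrow> coker M f x = mcoset M (f ` carrier M) x"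
  by (simp add: coker_def quot_proj_def)

lemma coker_eq_zero_iff:
  "f \<in> endos \<Longrightarrow> x \<in> carrier M \<Longrightarrow> coker M f x = zero (Coker M f) \<longleftrightarrow> x \<in> f ` carrier M"
  using mcoset_eq_submod_iff[OF image_is_submod] by (simp add: coker_apply)

lemma coker_mhom_zero:
  assumes g: "g \<in> endos" and h: "h \<in> mhom (opp R) (Coker M g) M"
  shows "h (zero (Coker M g)) = \<zero>"
  using quot_mhom_zero[OF image_is_submod[OF g]] h by (simp add: Coker_def quot_mod_def)

lemma coker_mhom_comp_endo:
  assumes g: "g \<in> endos" and h: "h \<in> mhom (opp R) (Coker M g) M"
  shows "(\<lambda>y\<in>carrier M. h (coker M g y)) \<in> endos"
proof -
  have "(\<lambda>y\<in>carrier M. h (mcoset M (g ` carrier M) y)) \<in> endos"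
    using quot_mhom_mcoset_endo[OF image_is_submod[OF g]] h by (simp add: Coker_def)
  then show ?thesis by (simp add: coker_apply cong: restrict_cong)
qed

lemma coker_mhom_kills_image:
  assumes g: "g \<in> endos" and h: "h \<in> mhom (opp R) (Coker M g) M" and y: "y \<in> carrier M"
  shows "h (coker M g (g y)) = \<zero>"
proof -
  have "coker M g (g y) = zero (Coker M g)"
    using coker_eq_zero_iff[OF g mhom_closed[OF g y]] y by blast
  then show ?thesis using coker_mhom_zero[OF g h] by simp
qed

lemma coker_section:
  assumes f: "f \<in> endos" and p: "p \<in> endos" "\<And>x. x \<in> carrier M \<Longrightarrow> p x \<in> f ` carrier M"
    "\<And>x. x \<in> f ` carrier M \<Longrightarrow> p x = x"
  obtains \<phi> where "\<phi> \<in> mhom (opp R) (Coker M f) M"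
    "\<And>c. c \<in> carrier (Coker M f) \<Longrightarrow> coker M f (\<phi> c) = c"
proof -
  let ?I = "f ` carrier M" and ?e = "\<lambda>x\<in>carrier M. x \<ominus> p x"
  have I: "is_submod (opp R) M ?I" by (rule image_is_submod[OF f])
  have e: "?e \<in> endos" by (rule complement_endo[OF p(1)])
  have e0: "?e x = \<zero>" if "x \<in> ?I" for x
    using that p(3) mhom_closed[OF f] minus_self by auto
  have "coker M f (quot_lift M ?I ?e c) = c" if "c \<in> carrier (Coker M f)" for c
  proof -
    obtain a where a: "a \<in> carrier M" "c = mcoset M ?I a" using \<open>c \<in> carrier (Coker M f)\<close> by auto
    have pa: "p a \<in> ?I" "p a \<in> carrier M" using p(2)[OF a(1)] mhom_closed[OF p(1) a(1)] by auto
    have "(a \<ominus> p a) \<ominus> a = \<ominus> p a"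
      using a(1) pa(2) by (simp add: a_minus_def a_comm r_neg1 minus_add minus_minus)
    then have "mcoset M ?I (a \<ominus> p a) = c"
      using mcoset_eq_iff[OF I _ a(1)] a pa submod_a_inv_closed[OF I] by simp
    moreover have "quot_lift M ?I ?e c = ?e a" unfolding a(2) by (rule quot_lift_mcoset[OF I e e0 a(1)])
    ultimately show ?thesis using coker_apply[OF minus_closed[OF a(1) pa(2)]] a(1) by simp
  qed
  moreover have "quot_lift M ?I ?e \<in> mhom (opp R) (Coker M f) M"
    unfolding Coker_def by (rule quot_lift_mhom[OF I e e0])
  ultimately show ?thesis using that by blast
qed

lemma coker_mhom_vanishes_on_ann_kernel:
  assumes e: "left_ann_generator f e" and f: "f \<in> endos" and h: "h \<in> mhom (opp R) (Coker M f) M"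
    and x: "x \<in> carrier M" "e x = \<zero>"
  shows "h (coker M f x) = \<zero>"
proof -
  define g where "g = (\<lambda>y\<in>carrier M. h (coker M f y))"
  have g: "g \<in> endos" unfolding g_def by (rule coker_mhom_comp_endo[OF f h])
  have "g (f y) = \<zero>" if "y \<in> carrier M" for y
    using coker_mhom_kills_image[OF f h that] mhom_closed[OF f that] by (simp add: g_def)
  then have "g (e x) = g x" using e g x(1) by (simp add: left_ann_generator_def)
  then have "g x = \<zero>" using x(2) endo_zero[OF g] by simp
  then show ?thesis using x(1) by (simp add: g_def)
qed

lemma dssr_iff_M_cocyclic_cokernels:
  "dual_strongly_self_rickart (opp R) M \<longleftrightarrow> strongly_self_rickart S (ring_lmod S) \<and>
     (\<forall>f\<in>carrier S. M_cocyclic R M (Coker M f))"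
proof (rule dssr_iff_End_lmod_ssr_and)
  fix f p assume f: "f \<in> endos" and p: "p \<in> endos" "\<And>x. x \<in> carrier M \<Longrightarrow> p x \<in> f ` carrier M"
    "\<And>x. x \<in> f ` carrier M \<Longrightarrow> p x = x"
  obtain \<phi> where \<phi>: "\<phi> \<in> mhom (opp R) (Coker M f) M"
    "\<And>c. c \<in> carrier (Coker M f) \<Longrightarrow> coker M f (\<phi> c) = c"
    using coker_section[OF f p] by metis
  have "inj_on \<phi> (carrier (Coker M f))" by (rule inj_on_inverseI[where g = "coker M f"]) (rule \<phi>(2))
  then show "M_cocyclic R M (Coker M f)" using \<phi>(1) by (auto simp: M_cocyclic_def)
next
  fix f e assume P: "\<forall>g\<in>endos. M_cocyclic R M (Coker M g)"
    and f: "f \<in> endos" and e: "left_ann_generator f e"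
  obtain h where h: "h \<in> mhom (opp R) (Coker M f) M" "inj_on h (carrier (Coker M f))"
    using P f by (auto simp: M_cocyclic_def)
  show "\<forall>x\<in>carrier M. e x = \<zero> \<longrightarrow> x \<in> f ` carrier M"
  proof (intro ballI impI)
    fix x assume x: "x \<in> carrier M" "e x = \<zero>"
    have I: "is_submod (opp R) M (f ` carrier M)" by (rule image_is_submod[OF f])
    have "h (zero (Coker M f)) = \<zero>" by (rule coker_mhom_zero[OF f h(1)])
    then have "h (coker M f x) = h (zero (Coker M f))"
      using coker_mhom_vanishes_on_ann_kernel[OF e f h(1) x] by simp
    moreover have "coker M f x \<in> carrier (Coker M f)" "zero (Coker M f) \<in> carrier (Coker M f)"
      using x(1) mcoset_zero[OF I] by (auto simp: coker_apply intro: image_eqI[of _ _ \<zero>])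
    ultimately have "coker M f x = zero (Coker M f)" using inj_onD[OF h(2)] by blast
    then show "x \<in> f ` carrier M" using coker_eq_zero_iff[OF f x(1)] by simp
  qed
qed

lemma dssr_iff_locally_split_cokernels:
  "dual_strongly_self_rickart (opp R) M \<longleftrightarrow> strongly_self_rickart S (ring_lmod S) \<and>
     (\<forall>f\<in>carrier S. epi_locally_split R M (Coker M f) (coker M f))"
proof (rule dssr_iff_End_lmod_ssr_and)
  fix f p assume f: "f \<in> endos" and p: "p \<in> endos" "\<And>x. x \<in> carrier M \<Longrightarrow> p x \<in> f ` carrier M"
    "\<And>x. x \<in> f ` carrier M \<Longrightarrow> p x = x"
  obtain \<phi> where "\<phi> \<in> mhom (opp R) (Coker M f) M"
    "\<And>c. c \<in> carrier (Coker M f) \<Longrightarrow> coker M f (\<phi> c) = c"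
    using coker_section[OF f p] by metis
  then show "epi_locally_split R M (Coker M f) (coker M f)" by (auto simp: epi_locally_split_def)
next
  fix f e assume P: "\<forall>g\<in>endos. epi_locally_split R M (Coker M g) (coker M g)"
    and f: "f \<in> endos" and e: "left_ann_generator f e"
  show "\<forall>x\<in>carrier M. e x = \<zero> \<longrightarrow> x \<in> f ` carrier M"
  proof (intro ballI impI)
    fix x assume x: "x \<in> carrier M" "e x = \<zero>"
    have "coker M f x \<in> carrier (Coker M f)" using x(1) by (simp add: coker_apply)
    then obtain h where h: "h \<in> mhom (opp R) (Coker M f) M" "coker M f (h (coker M f x)) = coker M f x"
      using P f unfolding epi_locally_split_def by blast
    then have "coker M f x = coker M f \<zero>"
      using coker_mhom_vanishes_on_ann_kernel[OF e f h(1) x] by simp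
    then show "x \<in> f ` carrier M"
      using coker_eq_zero_iff[OF f] coker_eq_zero_iff[OF f zero_closed] x(1) endo_zero[OF f]
      by (metis image_eqI zero_closed)
  qed
qed

lemma image_add_left_ann_generator:
  assumes e: "left_ann_generator f e" and f: "f \<in> endos"
    and x: "x \<in> add S f e ` carrier M" "e x = \<zero>"
  shows "x \<in> f ` carrier M"
proof -
  have eE: "e \<in> endos" and idem: "\<And>y. y \<in> carrier M \<Longrightarrow> e (e y) = e y"
    and ef: "\<And>y. y \<in> carrier M \<Longrightarrow> e (f y) = \<zero>"
    using e unfolding left_ann_generator_def central_idempotent_def idempotent_def by blast+
  obtain y where y: "y \<in> carrier M" "x = f y \<oplus> e y" using x(1) by auto
  have "e x = e y"
    using y mhom_add[OF eE] mhom_closed[OF f] mhom_closed[OF eE] ef idem by simp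
  then show ?thesis using x(2) y mhom_closed[OF f] by simp
qed

lemma image_contains_ann_kernel_if_c_quasi_coretractable:
  assumes cqc: "\<forall>g\<in>endos. carrier (Coker M g) \<noteq> {zero (Coker M g)} \<longrightarrow>
      (\<exists>h\<in>mhom (opp R) (Coker M g) M. \<exists>c\<in>carrier (Coker M g). h c \<noteq> \<zero>)"
    and f: "f \<in> endos" and e: "left_ann_generator f e"
  shows "\<forall>x\<in>carrier M. e x = \<zero> \<longrightarrow> x \<in> f ` carrier M"
proof (intro ballI impI, rule ccontr)
  fix x assume x: "x \<in> carrier M" "e x = \<zero>" "x \<notin> f ` carrier M"
  have eE: "e \<in> endos" and idem: "\<And>y. y \<in> carrier M \<Longrightarrow> e (e y) = e y"
    and comm: "\<And>h y. h \<in> endos \<Longrightarrow> y \<in> carrier M \<Longrightarrow> e (h y) = h (e y)"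
    and ef: "\<And>y. y \<in> carrier M \<Longrightarrow> e (f y) = \<zero>"
    and fix_ann: "\<And>g. g \<in> endos \<Longrightarrow> \<forall>y\<in>carrier M. g (f y) = \<zero> \<Longrightarrow> \<forall>y\<in>carrier M. g (e y) = g y"
    using e unfolding left_ann_generator_def central_idempotent_def idempotent_def by blast+
  let ?g = "add S f e"
  have g: "?g \<in> endos" using f eE by simp
  have "x \<notin> ?g ` carrier M" using image_add_left_ann_generator[OF e f] x by blast
  then have "coker M ?g x \<noteq> zero (Coker M ?g)" using coker_eq_zero_iff[OF g x(1)] by simp
  then have "carrier (Coker M ?g) \<noteq> {zero (Coker M ?g)}" using x(1) by (auto simp: coker_apply)
  then obtain h c where h: "h \<in> mhom (opp R) (Coker M ?g) M" and c: "c \<in> carrier (Coker M ?g)" "h c \<noteq> \<zero>"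
    using cqc g by blast
  define G where "G = (\<lambda>y\<in>carrier M. h (coker M ?g y))"
  have G: "G \<in> endos" unfolding G_def by (rule coker_mhom_comp_endo[OF g h])
  have Gg: "G (?g y) = \<zero>" if "y \<in> carrier M" for y
    using coker_mhom_kills_image[OF g h that] mhom_closed[OF g that] by (simp add: G_def)
  have Ge: "G (e y) = \<zero>" if y: "y \<in> carrier M" for y
  proof -
    have "f (e y) = \<zero>" using comm[OF f y] ef[OF y] by simp
    then have "?g (e y) = e y" using idem[OF y] mhom_closed[OF eE y] by simp
    then show ?thesis using Gg[OF mhom_closed[OF eE y]] by simp
  qed
  have "G (f y) = \<zero>" if y: "y \<in> carrier M" for y
  proof -
    have "G (?g y) = G (f y) \<oplus> G (e y)"
      using mhom_add[OF G mhom_closed[OF f y] mhom_closed[OF eE y]] y by simp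
    then show ?thesis using Gg[OF y] Ge[OF y] mhom_closed[OF G mhom_closed[OF f y]] by simp
  qed
  then have "G y = \<zero>" if "y \<in> carrier M" for y using fix_ann[OF G] Ge that by metis
  moreover obtain a where "a \<in> carrier M" "c = coker M ?g a" using c(1) by (auto simp: coker_apply)
  ultimately show False using c(2) by (simp add: G_def)
qed

lemma dssr_iff_c_quasi_coretractable:
  "dual_strongly_self_rickart (opp R) M \<longleftrightarrow> strongly_self_rickart S (ring_lmod S) \<and> c_quasi_coretractable R M"
  unfolding c_quasi_coretractable_def
proof (rule dssr_iff_End_lmod_ssr_and)
  fix f p assume f: "f \<in> endos" and p: "p \<in> endos" "\<And>x. x \<in> carrier M \<Longrightarrow> p x \<in> f ` carrier M"
    "\<And>x. x \<in> f ` carrier M \<Longrightarrow> p x = x"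
  obtain \<phi> where \<phi>: "\<phi> \<in> mhom (opp R) (Coker M f) M"
    "\<And>c. c \<in> carrier (Coker M f) \<Longrightarrow> coker M f (\<phi> c) = c"
    using coker_section[OF f p] by metis
  show "carrier (Coker M f) \<noteq> {zero (Coker M f)} \<longrightarrow>
      (\<exists>h\<in>mhom (opp R) (Coker M f) M. \<exists>c\<in>carrier (Coker M f). h c \<noteq> \<zero>)"
  proof
    assume "carrier (Coker M f) \<noteq> {zero (Coker M f)}"
    moreover have "zero (Coker M f) \<in> carrier (Coker M f)"
      using mcoset_zero[OF image_is_submod[OF f]] by (auto intro: image_eqI[of _ _ \<zero>])
    ultimately obtain c where c: "c \<in> carrier (Coker M f)" "c \<noteq> zero (Coker M f)" by blast
    have "\<phi> c \<noteq> \<zero>"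
    proof
      assume "\<phi> c = \<zero>"
      then have "c = coker M f \<zero>" using \<phi>(2)[OF c(1)] by simp
      then show False using c(2) coker_eq_zero_iff[OF f zero_closed] endo_zero[OF f] by (metis image_eqI zero_closed)
    qed
    then show "\<exists>h\<in>mhom (opp R) (Coker M f) M. \<exists>c\<in>carrier (Coker M f). h c \<noteq> \<zero>" using \<phi>(1) c(1) by blast
  qed
next
  fix f e assume P: "\<forall>g\<in>endos. carrier (Coker M g) \<noteq> {zero (Coker M g)} \<longrightarrow>
      (\<exists>h\<in>mhom (opp R) (Coker M g) M. \<exists>c\<in>carrier (Coker M g). h c \<noteq> \<zero>)"
    and f: "f \<in> endos" and e: "left_ann_generator f e"
  show "\<forall>x\<in>carrier M. e x = \<zero> \<longrightarrow> x \<in> f ` carrier M"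
    by (rule image_contains_ann_kernel_if_c_quasi_coretractable[OF P f e])
qed

lemma coker_mhom:
  assumes f: "f \<in> endos"
  shows "coker M f \<in> mhom (opp R) M (Coker M f)"
proof (rule mhomI)
  have I: "is_submod (opp R) M (f ` carrier M)" by (rule image_is_submod[OF f])
  fix x y assume "x \<in> carrier M" "y \<in> carrier M"
  then show "coker M f (x \<oplus> y) = coker M f x \<oplus>\<^bsub>Coker M f\<^esub> coker M f y"
    using quot_mod_add[OF I] by (simp add: coker_apply Coker_def)
next
  have I: "is_submod (opp R) M (f ` carrier M)" by (rule image_is_submod[OF f])
  fix r x assume "r \<in> carrier (opp R)" "x \<in> carrier M"
  then show "coker M f (smult M r x) = smult (Coker M f) r (coker M f x)"
    using quot_mod_smult[OF I] by (simp add: coker_apply Coker_def)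
qed (simp_all add: coker_apply coker_def quot_proj_def)

context
  fixes X :: "('r, 'x) module"
  assumes X_add_closed: "\<And>x y. x \<in> carrier X \<Longrightarrow> y \<in> carrier X \<Longrightarrow> x \<oplus>\<^bsub>X\<^esub> y \<in> carrier X"
    and X_smult_closed: "\<And>r x. r \<in> carrier R \<Longrightarrow> x \<in> carrier X \<Longrightarrow> smult X r x \<in> carrier X"

begin

lemma mhom_to_M_add:
  assumes "a \<in> mhom (opp R) X M" "b \<in> mhom (opp R) X M"
  shows "(\<lambda>x\<in>carrier X. a x \<oplus> b x) \<in> mhom (opp R) X M"
proof (rule mhomI)
  fix x y assume "x \<in> carrier X" "y \<in> carrier X"
  then show "(\<lambda>x\<in>carrier X. a x \<oplus> b x) (x \<oplus>\<^bsub>X\<^esub> y) =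
      (\<lambda>x\<in>carrier X. a x \<oplus> b x) x \<oplus> (\<lambda>x\<in>carrier X. a x \<oplus> b x) y"
    using assms X_add_closed by (simp add: mhom_add mhom_closed minus_add_minus a_ac)
next
  fix r x assume "r \<in> carrier (opp R)" "x \<in> carrier X"
  then show "(\<lambda>x\<in>carrier X. a x \<oplus> b x) (smult X r x) = smult M r ((\<lambda>x\<in>carrier X. a x \<oplus> b x) x)"
    using assms X_smult_closed by (simp add: mhom_smult mhom_closed smult_add)
qed (use assms in \<open>simp_all add: mhom_closed\<close>)

lemma homXM_lmod_eval_mhom:
  assumes x: "x \<in> carrier X"
  shows "(\<lambda>\<psi>\<in>mhom (opp R) X M. \<psi> x) \<in> mhom S (homXM_lmod R M X) (End_lmod M)"
proof (rule mhomI)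
  fix a b assume "a \<in> carrier (homXM_lmod R M X)" "b \<in> carrier (homXM_lmod R M X)"
  then show "(\<lambda>\<psi>\<in>mhom (opp R) X M. \<psi> x) (a \<oplus>\<^bsub>homXM_lmod R M X\<^esub> b) =
      (\<lambda>\<psi>\<in>mhom (opp R) X M. \<psi> x) a \<oplus>\<^bsub>End_lmod M\<^esub> (\<lambda>\<psi>\<in>mhom (opp R) X M. \<psi> x) b"
    using x mhom_to_M_add by simp
next
  fix s a assume "s \<in> carrier S" "a \<in> carrier (homXM_lmod R M X)"
  then show "(\<lambda>\<psi>\<in>mhom (opp R) X M. \<psi> x) (smult (homXM_lmod R M X) s a) =
      smult (End_lmod M) s ((\<lambda>\<psi>\<in>mhom (opp R) X M. \<psi> x) a)"
    using x mhom_comp[of s "opp R" M M a X] X_add_closed X_smult_closed by simp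
qed (use x in \<open>auto simp: mhom_closed\<close>)

text \<open>A retract of M is M-reflexive: the double dual of X is determined by the value at the
  section, since every map X \<rightarrow> M factors as (\<psi> \<circ> \<pi>) \<circ> \<phi>.\<close>

lemma in_Refl_if_retract:
  assumes \<phi>: "\<phi> \<in> mhom (opp R) X M" and \<pi>: "\<pi> \<in> mhom (opp R) M X"
    and retract: "\<And>c. c \<in> carrier X \<Longrightarrow> \<pi> (\<phi> c) = c"
  shows "in_Refl R M X"
proof -
  let ?H = "mhom (opp R) X M" and ?T = "mhom S (homXM_lmod R M X) (End_lmod M)"
  let ?ev = "\<lambda>x\<in>carrier X. \<lambda>\<psi>\<in>?H. \<psi> x"
  have "inj_on ?ev (carrier X)"
  proof (rule inj_onI)
    fix a b assume "a \<in> carrier X" "b \<in> carrier X" "?ev a = ?ev b"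
    then have "(\<lambda>\<psi>\<in>?H. \<psi> a) \<phi> = (\<lambda>\<psi>\<in>?H. \<psi> b) \<phi>" by simp
    then have "\<phi> a = \<phi> b" using \<phi> by simp
    then show "a = b" using retract \<open>a \<in> carrier X\<close> \<open>b \<in> carrier X\<close> by metis
  qed
  moreover have "?ev ` carrier X = ?T"
  proof
    show "?ev ` carrier X \<subseteq> ?T" using homXM_lmod_eval_mhom by auto
    show "?T \<subseteq> ?ev ` carrier X"
    proof
      fix \<Psi> assume \<Psi>: "\<Psi> \<in> ?T"
      define y where "y = \<Psi> \<phi>"
      have y: "y \<in> carrier M" using mhom_closed[OF \<Psi>, of \<phi>] \<phi> by (simp add: y_def)
      have "\<Psi> \<psi> = \<psi> (\<pi> y)" if \<psi>: "\<psi> \<in> ?H" for \<psi>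
      proof -
        let ?s = "\<lambda>z\<in>carrier M. \<psi> (\<pi> z)"
        have s: "?s \<in> endos" by (rule mhom_comp[OF \<psi> \<pi>]) auto
        have "smult (homXM_lmod R M X) ?s \<phi> = \<psi>"
          using retract mhom_closed[OF \<phi>] mhom_undefined[OF \<psi>] by (auto simp: fun_eq_iff)
        then have "\<Psi> \<psi> = ?s (\<Psi> \<phi>)" using mhom_smult[OF \<Psi>, of ?s \<phi>] s \<phi> by simp
        then show ?thesis using y by (simp add: y_def)
      qed
      then have "\<Psi> = ?ev (\<pi> y)"
        using mhom_undefined[OF \<Psi>] mhom_closed[OF \<pi> y] by (auto simp: fun_eq_iff)
      then show "\<Psi> \<in> ?ev ` carrier X" using mhom_closed[OF \<pi> y] by blast
    qed
  qed
  ultimately show ?thesis unfolding in_Refl_def bij_betw_def by simp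
qed

end

lemma dssr_iff_Refl_cokernels:
  "dual_strongly_self_rickart (opp R) M \<longleftrightarrow> strongly_self_rickart S (ring_lmod S) \<and>
     (\<forall>f\<in>carrier S. in_Refl R M (Coker M f))"
proof (rule dssr_iff_End_lmod_ssr_and)
  fix f p assume f: "f \<in> endos" and p: "p \<in> endos" "\<And>x. x \<in> carrier M \<Longrightarrow> p x \<in> f ` carrier M"
    "\<And>x. x \<in> f ` carrier M \<Longrightarrow> p x = x"
  obtain \<phi> where \<phi>: "\<phi> \<in> mhom (opp R) (Coker M f) M"
    "\<And>c. c \<in> carrier (Coker M f) \<Longrightarrow> coker M f (\<phi> c) = c"
    using coker_section[OF f p] by metis
  have I: "is_submod (opp R) M (f ` carrier M)" by (rule image_is_submod[OF f])
  show "in_Refl R M (Coker M f)"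
  proof (rule in_Refl_if_retract[OF _ _ \<phi>(1) coker_mhom[OF f] \<phi>(2)])
    show "x \<oplus>\<^bsub>Coker M f\<^esub> y \<in> carrier (Coker M f)" if "x \<in> carrier (Coker M f)" "y \<in> carrier (Coker M f)" for x y
      using that quot_mod_add_closed[OF I] by (simp add: Coker_def)
    show "smult (Coker M f) r x \<in> carrier (Coker M f)" if "r \<in> carrier R" "x \<in> carrier (Coker M f)" for r x
      using that quot_mod_smult_closed[OF I] by (simp add: Coker_def)
  qed
next
  fix f e assume P: "\<forall>g\<in>endos. in_Refl R M (Coker M g)"
    and f: "f \<in> endos" and e: "left_ann_generator f e"
  have inj: "inj_on (\<lambda>x\<in>carrier (Coker M f). \<lambda>\<psi>\<in>mhom (opp R) (Coker M f) M. \<psi> x) (carrier (Coker M f))"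
    using P f by (simp add: in_Refl_def bij_betw_def)
  show "\<forall>x\<in>carrier M. e x = \<zero> \<longrightarrow> x \<in> f ` carrier M"
  proof (intro ballI impI)
    fix x assume x: "x \<in> carrier M" "e x = \<zero>"
    have in_carrier: "coker M f x \<in> carrier (Coker M f)" "zero (Coker M f) \<in> carrier (Coker M f)"
      using x(1) mcoset_zero[OF image_is_submod[OF f]] by (auto simp: coker_apply intro: image_eqI[of _ _ \<zero>])
    have "(\<lambda>\<psi>\<in>mhom (opp R) (Coker M f) M. \<psi> (coker M f x)) =
        (\<lambda>\<psi>\<in>mhom (opp R) (Coker M f) M. \<psi> (zero (Coker M f)))"
      using coker_mhom_vanishes_on_ann_kernel[OF e f _ x] coker_mhom_zero[OF f]
      by (intro restrict_ext) simp
    then have "coker M f x = zero (Coker M f)" using inj_onD[OF inj] in_carrier by simp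
    then show "x \<in> f ` carrier M" using coker_eq_zero_iff[OF f x(1)] by simp
  qed
qed

end

theorem theorem4p12:
  fixes R :: "'r ring" and M :: "('r, 'm) module"
  assumes "ring R" and "rmod R M"
  defines "S \<equiv> End_ring (opp R) M"
  shows
   "(strongly_self_rickart (opp R) M \<longleftrightarrow>
       strongly_self_rickart (opp S) (ring_rmod S) \<and>
       (\<forall>f\<in>carrier S. M_cyclic R M (submod M (mker M M f))))
  \<and> (strongly_self_rickart (opp R) M \<longleftrightarrow>
       strongly_self_rickart (opp S) (ring_rmod S) \<and>
       (\<forall>f\<in>carrier S. in_Stat R M (submod M (mker M M f))))
  \<and> (strongly_self_rickart (opp R) M \<longleftrightarrow>
       strongly_self_rickart (opp S) (ring_rmod S) \<and>
       (\<forall>f\<in>carrier S. incl_locally_split R M (mker M M f)))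
  \<and> (strongly_self_rickart (opp R) M \<longleftrightarrow>
       strongly_self_rickart (opp S) (ring_rmod S) \<and> k_quasi_retractable R M)
  \<and> (dual_strongly_self_rickart (opp R) M \<longleftrightarrow>
       strongly_self_rickart S (ring_lmod S) \<and>
       (\<forall>f\<in>carrier S. M_cocyclic R M (Coker M f)))
  \<and> (dual_strongly_self_rickart (opp R) M \<longleftrightarrow>
       strongly_self_rickart S (ring_lmod S) \<and>
       (\<forall>f\<in>carrier S. in_Refl R M (Coker M f)))
  \<and> (dual_strongly_self_rickart (opp R) M \<longleftrightarrow>
       strongly_self_rickart S (ring_lmod S) \<and>
       (\<forall>f\<in>carrier S. epi_locally_split R M (Coker M f) (coker M f)))
  \<and> (dual_strongly_self_rickart (opp R) M \<longleftrightarrow>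
       strongly_self_rickart S (ring_lmod S) \<and> c_quasi_coretractable R M)"
proof -
  interpret right_module R M by (rule right_module.intro) (fact assms(2))
  show ?thesis
    unfolding S_def
    using ssr_iff_M_cyclic_kernels ssr_iff_Stat_kernels ssr_iff_locally_split_kernels
      ssr_iff_k_quasi_retractable dssr_iff_M_cocyclic_cokernels dssr_iff_Refl_cokernels
      dssr_iff_locally_split_cokernels dssr_iff_c_quasi_coretractable
    by (intro conjI)
qed

end
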